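(* Let $\Lambda$ be a finite $k$-graph with no sources and let $J\sqcup K$ be a partition of $\{1,\dots,k\}$ with $J,K$ both nonempty. Let $\{\xi_{m,x}: m\in\mathbb{N}^J, x\in\Lambda^{m,\infty_K}\}$ be the orthonormal basis of point masses in $\ell^2(\partial^K\Lambda)=\bigoplus_{m\in\mathbb{N}^J}\ell^2(\Lambda^{m,\infty_K})$. For $\lambda\in\Lambda$ let $T_\lambda$ be the operator with $T_\lambda\xi_{m,x}=\xi_{m+d(\lambda)_J,\lambda x}$ if $s(\lambda)=r(x)$ and $T_\lambda\xi_{m,x}=0$ otherwise. Then $\{T_\lambda:\lambda\in\Lambda\}$ is a Toeplitz–Cuntz–Krieger $\Lambda$-family, and $\sum_{e\in v\Lambda^{e_i}}T_eT_e^*=T_v$ for all $v\in\Lambda^0$ and $i\in K$.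
   Context: A $k$-graph is a countable category $\Lambda$ with a degree functor $d:\Lambda\to\mathbb{N}^k$ satisfying the factorisation property (if $d(\lambda)=m+n$ there are unique $\mu,\nu$ with $d(\mu)=m$, $d(\nu)=n$, $\lambda=\mu\nu$); vertices $\Lambda^0=d^{-1}(0)$, range $r$ and source $s$, $\Lambda^n=d^{-1}(n)$, $v\Lambda^n=\{\lambda\in\Lambda^n:r(\lambda)=v\}$; finite means each $\Lambda^n$ finite; no sources means $v\Lambda^n\neq\emptyset$ for all $v,n$. $e_1,\dots,e_k$ are the generators of $\mathbb{N}^k$; $\vee$ is coordinatewise maximum. Paths: for $n\in(\mathbb{N}\cup\{\infty\})^k$, $\Lambda^n$ is the set of degree-preserving functors $x$ from $\Omega_{k,n}$ (morphisms $(p,q)$ with $p\le q\le n$, $d(p,q)=q-p$) to $\Lambda$, $d(x)=n$, $r(x)=x(0,0)$; for $\lambda\in\Lambda$ with $s(\lambda)=r(x)$, $\lambda x$ is the unique path of degree $d(\lambda)+d(x)$ with $(\lambda x)(0,d(\lambda))=\lambda$ and $(\lambda x)(d(\lambda)+p,d(\lambda)+q)=x(p,q)$. Writing $n=(n_J,n_K)$: for $m\in\mathbb{N}^J$, $\Lambda^{m,\infty_K}$ is the set of paths $x$ with $d(x)_J=m$ and $d(x)_i=\infty$ for $i\in K$, and $\partial^K\Lambda=\bigcup_{m\in\mathbb{N}^J}\Lambda^{m,\infty_K}$. For $\mu,\nu\in\Lambda$, $\Lambda^{\min}(\mu,\nu)=\{(\eta,\zeta)\in\Lambda\times\Lambda:\mu\eta=\nu\zeta,\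 d(\mu\eta)=d(\mu)\vee d(\nu)\}$. A Toeplitz–Cuntz–Krieger $\Lambda$-family is a set of partial isometries $\{T_\lambda\}$ with (T1) $\{T_v:v\in\Lambda^0\}$ mutually orthogonal projections; (T2) $T_\lambda T_\mu=T_{\lambda\mu}$ when $s(\lambda)=r(\mu)$; (T3) $T_\lambda^*T_\lambda=T_{s(\lambda)}$; (T4) $T_v\ge\sum_{\lambda\in v\Lambda^n}T_\lambda T_\lambda^*$ for all $v,n$; (T5) $T_\mu^*T_\nu=\sum_{(\eta,\zeta)\in\Lambda^{\min}(\mu,\nu)}T_\eta T_\zeta^*$ (empty sum $=0$). *)

theory Defs
  imports "HOL-Analysis.Analysis" "HOL-Library.Extended_Nat"
begin

text \<open>A (small) category given by its set of morphisms; objects are identified with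
  identity morphisms. Degrees in N^k are functions nat => nat supported in {1..k}.\<close>

record 'a kgraph =
  mor :: "'a set"
  deg :: "'a \<Rightarrow> nat \<Rightarrow> nat"
  rng :: "'a \<Rightarrow> 'a"
  src :: "'a \<Rightarrow> 'a"
  cmp :: "'a \<Rightarrow> 'a \<Rightarrow> 'a"

definition is_kgraph :: "nat \<Rightarrow> 'a kgraph \<Rightarrow> bool" where
  "is_kgraph k G \<longleftrightarrow> countable (mor G) \<and>
    (\<forall>l\<in>mor G. rng G l \<in> mor G \<and> src G l \<in> mor G \<and>
        rng G (rng G l) = rng G l \<and> src G (rng G l) = rng G l \<and>
        rng G (src G l) = src G l \<and> src G (src G l) = src G l \<and>
        cmp G (rng G l) l = l \<and> cmp G l (src G l) = l \<and>
        (\<forall>j. j \<notin> {1..k} \<longrightarrow> deg G l j = 0)) \<and>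
    (\<forall>l\<in>mor G. \<forall>m\<in>mor G. src G l = rng G m \<longrightarrow>
        cmp G l m \<in> mor G \<and> rng G (cmp G l m) = rng G l \<and> src G (cmp G l m) = src G m \<and>
        deg G (cmp G l m) = (\<lambda>j. deg G l j + deg G m j)) \<and>
    (\<forall>l\<in>mor G. \<forall>m\<in>mor G. \<forall>n\<in>mor G. src G l = rng G m \<and> src G m = rng G n \<longrightarrow>
        cmp G (cmp G l m) n = cmp G l (cmp G m n)) \<and>
    (\<forall>l\<in>mor G. \<forall>m n. deg G l = (\<lambda>j. m j + n j) \<longrightarrow>
        (\<exists>!pr. fst pr \<in> mor G \<and> snd pr \<in> mor G \<and> deg G (fst pr) = m \<and> deg G (snd pr) = n \<and>
               src G (fst pr) = rng G (snd pr) \<and> l = cmp G (fst pr) (snd pr)))"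

definition kLam :: "'a kgraph \<Rightarrow> (nat \<Rightarrow> nat) \<Rightarrow> 'a set" where
  "kLam G n = {l \<in> mor G. deg G l = n}"

definition vertices :: "'a kgraph \<Rightarrow> 'a set" where
  "vertices G = kLam G (\<lambda>_. 0)"

definition is_degree :: "nat \<Rightarrow> (nat \<Rightarrow> nat) \<Rightarrow> bool" where
  "is_degree k n \<longleftrightarrow> (\<forall>j. j \<notin> {1..k} \<longrightarrow> n j = 0)"

definition unitv :: "nat \<Rightarrow> nat \<Rightarrow> nat" where
  "unitv i = (\<lambda>j. if j = i then 1 else 0)"

definition finite_kgraph :: "'a kgraph \<Rightarrow> bool" where
  "finite_kgraph G \<longleftrightarrow> (\<forall>n. finite (kLam G n))"

definition no_sources :: "nat \<Rightarrow> 'a kgraph \<Rightarrow> bool" where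
  "no_sources k G \<longleftrightarrow> (\<forall>v\<in>vertices G. \<forall>n. is_degree k n \<longrightarrow> {l \<in> kLam G n. rng G l = v} \<noteq> {})"

definition Lmin :: "'a kgraph \<Rightarrow> 'a \<Rightarrow> 'a \<Rightarrow> ('a \<times> 'a) set" where
  "Lmin G \<mu> \<nu> = {(\<eta>, \<zeta>). \<eta> \<in> mor G \<and> \<zeta> \<in> mor G \<and> src G \<mu> = rng G \<eta> \<and> src G \<nu> = rng G \<zeta> \<and>
      cmp G \<mu> \<eta> = cmp G \<nu> \<zeta> \<and> deg G (cmp G \<mu> \<eta>) = sup (deg G \<mu>) (deg G \<nu>)}"

text \<open>A path of degree n in (N u {oo})^k is a degree-preserving functor from Omega_{k,n};
  we store the degree together with the functor, given on morphisms (p,q) with p <= q <= n,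
  normalised to undefined outside that domain.\<close>

type_synonym 'a kpath = "(nat \<Rightarrow> enat) \<times> ((nat \<Rightarrow> nat) \<times> (nat \<Rightarrow> nat) \<Rightarrow> 'a)"

definition pdom :: "(nat \<Rightarrow> enat) \<Rightarrow> ((nat \<Rightarrow> nat) \<times> (nat \<Rightarrow> nat)) set" where
  "pdom n = {(p, q). (\<forall>j. p j \<le> q j) \<and> (\<forall>j. enat (q j) \<le> n j)}"

definition is_path :: "nat \<Rightarrow> 'a kgraph \<Rightarrow> 'a kpath \<Rightarrow> bool" where
  "is_path k G x \<longleftrightarrow>
    (\<forall>j. j \<notin> {1..k} \<longrightarrow> fst x j = 0) \<and>
    (\<forall>pq. pq \<notin> pdom (fst x) \<longrightarrow> snd x pq = undefined) \<and>
    (\<forall>p q. (p, q) \<in> pdom (fst x) \<longrightarrow>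
        snd x (p, q) \<in> mor G \<and> deg G (snd x (p, q)) = (\<lambda>j. q j - p j) \<and>
        rng G (snd x (p, q)) = snd x (p, p) \<and> src G (snd x (p, q)) = snd x (q, q)) \<and>
    (\<forall>p q t. (p, q) \<in> pdom (fst x) \<and> (q, t) \<in> pdom (fst x) \<longrightarrow>
        snd x (p, t) = cmp G (snd x (p, q)) (snd x (q, t)))"

definition prng :: "'a kpath \<Rightarrow> 'a" where
  "prng x = snd x (\<lambda>_. 0, \<lambda>_. 0)"

definition prepend :: "nat \<Rightarrow> 'a kgraph \<Rightarrow> 'a \<Rightarrow> 'a kpath \<Rightarrow> 'a kpath" where
  "prepend k G l x = (THE y. is_path k G y \<and> fst y = (\<lambda>j. enat (deg G l j) + fst x j) \<and>
     snd y (\<lambda>_. 0, deg G l) = l \<and>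
     (\<forall>p q. (p, q) \<in> pdom (fst x) \<longrightarrow>
        snd y (\<lambda>j. deg G l j + p j, \<lambda>j. deg G l j + q j) = snd x (p, q)))"

definition bdryK :: "nat \<Rightarrow> 'a kgraph \<Rightarrow> nat set \<Rightarrow> nat set \<Rightarrow> 'a kpath set" where
  "bdryK k G J K = {x. is_path k G x \<and> (\<forall>j\<in>J. fst x j \<noteq> \<infinity>) \<and> (\<forall>i\<in>K. fst x i = \<infinity>)}"

type_synonym 'b op = "('b \<Rightarrow> complex) \<Rightarrow> ('b \<Rightarrow> complex)"

definition L2 :: "'b set \<Rightarrow> ('b \<Rightarrow> complex) set" where
  "L2 X = {f. (\<forall>x. x \<notin> X \<longrightarrow> f x = 0) \<and> (\<lambda>x. (cmod (f x))\<^sup>2) summable_on X}"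

definition l2inner :: "'b set \<Rightarrow> ('b \<Rightarrow> complex) \<Rightarrow> ('b \<Rightarrow> complex) \<Rightarrow> complex" where
  "l2inner X f g = infsum (\<lambda>x. cnj (f x) * g x) X"

definition l2norm :: "'b set \<Rightarrow> ('b \<Rightarrow> complex) \<Rightarrow> real" where
  "l2norm X f = sqrt (infsum (\<lambda>x. (cmod (f x))\<^sup>2) X)"

definition delta :: "'b \<Rightarrow> 'b \<Rightarrow> complex" where
  "delta x = (\<lambda>y. if y = x then 1 else 0)"

definition zero_op :: "'b op" where
  "zero_op = (\<lambda>f y. 0)"

definition bounded_op :: "'b set \<Rightarrow> 'b op \<Rightarrow> bool" where
  "bounded_op X A \<longleftrightarrow> (\<forall>f\<in>L2 X. A f \<in> L2 X) \<and>
     (\<forall>f\<in>L2 X. \<forall>g\<in>L2 X. \<forall>c. A (\<lambda>x. c * f x + g x) = (\<lambda>x. c * A f x + A g x)) \<and>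
     (\<exists>C. \<forall>f\<in>L2 X. l2norm X (A f) \<le> C * l2norm X f)"

definition op_eq :: "'b set \<Rightarrow> 'b op \<Rightarrow> 'b op \<Rightarrow> bool" where
  "op_eq X A B \<longleftrightarrow> (\<forall>f\<in>L2 X. A f = B f)"

definition is_adjoint :: "'b set \<Rightarrow> 'b op \<Rightarrow> 'b op \<Rightarrow> bool" where
  "is_adjoint X A B \<longleftrightarrow> bounded_op X B \<and>
     (\<forall>f\<in>L2 X. \<forall>g\<in>L2 X. l2inner X (A f) g = l2inner X f (B g))"

definition adj :: "'b set \<Rightarrow> 'b op \<Rightarrow> 'b op" where
  "adj X A = (SOME B. is_adjoint X A B)"

definition is_projection :: "'b set \<Rightarrow> 'b op \<Rightarrow> bool" where
  "is_projection X P \<longleftrightarrow> bounded_op X P \<and> op_eq X (P \<circ> P) P \<and>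
     (\<forall>f\<in>L2 X. \<forall>g\<in>L2 X. l2inner X (P f) g = l2inner X f (P g))"

definition partial_isometry :: "'b set \<Rightarrow> 'b op \<Rightarrow> bool" where
  "partial_isometry X A \<longleftrightarrow> bounded_op X A \<and> is_projection X (adj X A \<circ> A)"

definition op_le :: "'b set \<Rightarrow> 'b op \<Rightarrow> 'b op \<Rightarrow> bool" where
  "op_le X A B \<longleftrightarrow> (\<forall>f\<in>L2 X. Im (l2inner X f (B f) - l2inner X f (A f)) = 0 \<and>
                                 0 \<le> Re (l2inner X f (B f) - l2inner X f (A f)))"

definition op_sum :: "'i set \<Rightarrow> ('i \<Rightarrow> 'b op) \<Rightarrow> 'b op" where
  "op_sum F A = (\<lambda>f y. \<Sum>i\<in>F. A i f y)"

definition TCK_family :: "nat \<Rightarrow> 'a kgraph \<Rightarrow> 'b set \<Rightarrow> ('a \<Rightarrow> 'b op) \<Rightarrow> bool" where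
  "TCK_family k G X T \<longleftrightarrow>
    (\<forall>l\<in>mor G. partial_isometry X (T l)) \<and>
    \<comment> \<open>(T1)\<close>
    (\<forall>v\<in>vertices G. is_projection X (T v)) \<and>
    (\<forall>v\<in>vertices G. \<forall>w\<in>vertices G. v \<noteq> w \<longrightarrow> op_eq X (T v \<circ> T w) zero_op) \<and>
    \<comment> \<open>(T2)\<close>
    (\<forall>l\<in>mor G. \<forall>m\<in>mor G. src G l = rng G m \<longrightarrow> op_eq X (T l \<circ> T m) (T (cmp G l m))) \<and>
    \<comment> \<open>(T3)\<close>
    (\<forall>l\<in>mor G. op_eq X (adj X (T l) \<circ> T l) (T (src G l))) \<and>
    \<comment> \<open>(T4)\<close>
    (\<forall>v\<in>vertices G. \<forall>n. is_degree k n \<longrightarrow>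
        op_le X (op_sum {l \<in> kLam G n. rng G l = v} (\<lambda>l. T l \<circ> adj X (T l))) (T v)) \<and>
    \<comment> \<open>(T5)\<close>
    (\<forall>\<mu>\<in>mor G. \<forall>\<nu>\<in>mor G.
        op_eq X (adj X (T \<mu>) \<circ> T \<nu>) (op_sum (Lmin G \<mu> \<nu>) (\<lambda>(\<eta>, \<zeta>). T \<eta> \<circ> adj X (T \<zeta>))))"

end

theory Submission
  imports Defs
begin

(* Each T_l sends the point mass at x to that at l x when s(l) = r(x), so T_l is the
   operator induced by the partial injection x |-> l x on the boundary path space X with
   domain {x. r(x) = s(l)}.  For such operators everything reduces to set theory: the
   adjoint is composition with the injection, T_l T_l^* and T_l^* T_l multiply by the
   indicators of range and domain, and products compose the injections.  Then (T2), (T3)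
   are associativity and cancellation of prepending, (T4) is disjointness of the ranges
   of morphisms of equal degree, (T5) is unique factorisation of common extensions
   through Lambda^min, and the Cuntz-Krieger relation holds because every boundary path
   has infinite i-th degree for i in K and so begins with an edge of degree e_i. *)

section \<open>Partial-injection operators on l^2(X)\<close>

definition restr :: "'b set \<Rightarrow> ('b \<Rightarrow> complex) \<Rightarrow> 'b \<Rightarrow> complex" where
  "restr E f = (\<lambda>y. if y \<in> E then f y else 0)"

definition pinj_op :: "'b set \<Rightarrow> ('b \<Rightarrow> 'b) \<Rightarrow> ('b \<Rightarrow> complex) \<Rightarrow> 'b \<Rightarrow> complex" where
  "pinj_op D \<phi> f = (\<lambda>y. if y \<in> \<phi> ` D then f (the_inv_into D \<phi> y) else 0)"

definition pinj_adj :: "'b set \<Rightarrow> ('b \<Rightarrow> 'b) \<Rightarrow> ('b \<Rightarrow> complex) \<Rightarrow> 'b \<Rightarrow> complex" where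
  "pinj_adj D \<phi> g = (\<lambda>x. if x \<in> D then g (\<phi> x) else 0)"

lemma L2_vanishes: "f \<in> L2 X \<Longrightarrow> y \<notin> X \<Longrightarrow> f y = 0"
  by (simp add: L2_def)

lemma L2_summable: "f \<in> L2 X \<Longrightarrow> (\<lambda>x. (cmod (f x))\<^sup>2) summable_on X"
  by (simp add: L2_def)

lemma L2_zero: "(\<lambda>_. 0) \<in> L2 X"
  by (simp add: L2_def)

lemma L2_delta: assumes "x \<in> X" shows "delta x \<in> L2 X"
proof -
  have "(\<lambda>y. (cmod (delta x y))\<^sup>2) summable_on X"
    by (rule finite_nonzero_values_imp_summable_on)
      (rule finite_subset[of _ "{x}"], auto simp: delta_def)
  thus ?thesis using assms by (auto simp: L2_def delta_def)
qed

lemma L2_restr: assumes "f \<in> L2 X" shows "restr E f \<in> L2 X"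
proof -
  have "(\<lambda>y. (cmod (restr E f y))\<^sup>2) summable_on X"
    by (rule summable_on_comparison_test[OF L2_summable[OF assms]]) (auto simp: restr_def)
  thus ?thesis using assms by (auto simp: L2_def restr_def)
qed

lemma cmod_add_sq_le: "(cmod (a + b))\<^sup>2 \<le> 2 * (cmod a)\<^sup>2 + 2 * (cmod b)\<^sup>2"
proof -
  have "(cmod (a + b))\<^sup>2 \<le> (cmod a + cmod b)\<^sup>2"
    by (simp add: power_mono norm_triangle_ineq)
  also have "\<dots> \<le> 2 * (cmod a)\<^sup>2 + 2 * (cmod b)\<^sup>2"
    using zero_le_power2[of "cmod a - cmod b"] by (simp add: power2_eq_square algebra_simps)
  finally show ?thesis .
qed

lemma L2_lin: assumes "f \<in> L2 X" "g \<in> L2 X" shows "(\<lambda>x. a * f x + g x) \<in> L2 X"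
proof -
  have bound: "(\<lambda>x. 2 * (cmod a)\<^sup>2 * (cmod (f x))\<^sup>2 + 2 * (cmod (g x))\<^sup>2) summable_on X"
    by (intro summable_on_add summable_on_cmult_right L2_summable assms)
  have "(\<lambda>x. (cmod (a * f x + g x))\<^sup>2) summable_on X"
  proof (rule summable_on_comparison_test[OF bound])
    fix x
    show "(cmod (a * f x + g x))\<^sup>2 \<le> 2 * (cmod a)\<^sup>2 * (cmod (f x))\<^sup>2 + 2 * (cmod (g x))\<^sup>2"
      using cmod_add_sq_le[of "a * f x" "g x"] by (simp add: norm_mult power_mult_distrib)
  qed auto
  thus ?thesis using assms by (auto simp: L2_def)
qed

lemma l2norm_nonneg: "0 \<le> l2norm X f"
  by (simp add: l2norm_def infsum_nonneg)

lemma norm_le_l2norm: assumes "h \<in> L2 X" shows "cmod (h y) \<le> l2norm X h"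
proof (cases "y \<in> X")
  case False thus ?thesis using assms L2_vanishes l2norm_nonneg by fastforce
next
  case True
  have "infsum (\<lambda>x. (cmod (h x))\<^sup>2) {y} \<le> infsum (\<lambda>x. (cmod (h x))\<^sup>2) X"
    by (rule infsum_mono_neutral) (use True L2_summable[OF assms] in auto)
  hence "(cmod (h y))\<^sup>2 \<le> infsum (\<lambda>x. (cmod (h x))\<^sup>2) X" by simp
  thus ?thesis unfolding l2norm_def by (rule real_le_rsqrt)
qed

lemma L2_small_tail:
  assumes "f \<in> L2 X" "e > 0" "finite F1" "F1 \<subseteq> X"
  shows "\<exists>F. finite F \<and> F1 \<subseteq> F \<and> F \<subseteq> X \<and> infsum (\<lambda>x. (cmod (f x))\<^sup>2) (X - F) < e"
proof -
  let ?g = "\<lambda>x. (cmod (f x))\<^sup>2"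
  have sg: "?g summable_on X" using L2_summable[OF assms(1)] .
  obtain F0 where F0: "finite F0" "F0 \<subseteq> X" "dist (sum ?g F0) (infsum ?g X) \<le> e/2"
    using infsum_finite_approximation[OF sg, of "e/2"] assms(2) by auto
  define F where "F = F0 \<union> F1"
  have fin: "finite F" "F \<subseteq> X" using F0 assms F_def by auto
  have sD: "?g summable_on (X - F)" by (rule summable_on_subset_banach[OF sg]) auto
  have "infsum ?g X = infsum ?g (F \<union> (X - F))" using fin by (simp add: Un_absorb1)
  also have "\<dots> = infsum ?g F + infsum ?g (X - F)"
    by (rule infsum_Un_disjoint) (use fin sD in auto)
  finally have rest: "infsum ?g (X - F) = infsum ?g X - sum ?g F" using fin by simp
  have "sum ?g F0 \<le> sum ?g F" by (rule sum_mono2) (use fin F_def in auto)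
  moreover have "infsum ?g X - sum ?g F0 \<le> dist (sum ?g F0) (infsum ?g X)"
    by (simp add: dist_real_def)
  ultimately have "infsum ?g X - sum ?g F \<le> e/2" using F0(3) by linarith
  thus ?thesis using rest assms(2) fin F_def by auto
qed

lemma eq_zero_if_arbitrarily_small:
  assumes "\<And>e. e > 0 \<Longrightarrow> cmod z \<le> C * e" "C \<ge> 0" shows "z = 0"
proof (rule ccontr)
  assume "z \<noteq> 0"
  hence p: "cmod z > 0" by simp
  have "cmod z \<le> C * (cmod z / (C + 1))" using assms(1)[of "cmod z / (C + 1)"] p assms(2) by simp
  also have "\<dots> < cmod z" using p assms(2) by (simp add: field_simps)
  finally show False by simp
qed

lemma l2inner_delta: assumes "x \<in> X" shows "l2inner X (delta x) h = h x"
proof -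
  have "l2inner X (delta x) h = infsum (\<lambda>y. cnj (delta x y) * h y) {x}"
    unfolding l2inner_def by (rule infsum_cong_neutral) (use assms in \<open>auto simp: delta_def\<close>)
  thus ?thesis by (simp add: delta_def)
qed

lemma bounded_op_linear: assumes "bounded_op X A" "f \<in> L2 X" "g \<in> L2 X"
  shows "A (\<lambda>x. a * f x + g x) = (\<lambda>x. a * A f x + A g x)"
  using assms unfolding bounded_op_def by blast

lemma bounded_op_zero: assumes "bounded_op X A" shows "A (\<lambda>_. 0) = (\<lambda>_. 0)"
  using bounded_op_linear[OF assms L2_zero L2_zero, of "-1"] by simp

lemma bounded_op_L2: "bounded_op X A \<Longrightarrow> f \<in> L2 X \<Longrightarrow> A f \<in> L2 X"
  unfolding bounded_op_def by blast

lemma pinj_op_delta: assumes "inj_on \<phi> D"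
  shows "pinj_op D \<phi> (delta x) = (if x \<in> D then delta (\<phi> x) else (\<lambda>_. 0))"
  unfolding pinj_op_def delta_def by (auto simp: fun_eq_iff the_inv_into_f_f[OF assms])

lemma bounded_op_eq_pinj_op_finite:
  assumes A: "bounded_op X A" and inj: "inj_on \<phi> D"
    and del: "\<forall>x\<in>X. A (delta x) = (if x \<in> D then delta (\<phi> x) else (\<lambda>_. 0))"
    and f: "f \<in> L2 X" and F: "finite F" "F \<subseteq> X"
  shows "A (restr F f) = pinj_op D \<phi> (restr F f)"
  using F
proof (induction F rule: finite_induct)
  case empty
  have "restr {} f = (\<lambda>_. 0)" by (simp add: restr_def)
  thus ?case using bounded_op_zero[OF A] by (simp add: pinj_op_def)
next
  case (insert x F)
  have split: "restr (insert x F) f = (\<lambda>y. f x * delta x y + restr F f y)"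
    using insert(2) by (auto simp: restr_def delta_def fun_eq_iff)
  have xX: "x \<in> X" using insert by auto
  have "A (restr (insert x F) f) = (\<lambda>y. f x * A (delta x) y + A (restr F f) y)"
    unfolding split by (rule bounded_op_linear[OF A L2_delta[OF xX] L2_restr[OF f]])
  also have "\<dots> = (\<lambda>y. f x * pinj_op D \<phi> (delta x) y + pinj_op D \<phi> (restr F f) y)"
    using insert del xX pinj_op_delta[OF inj] by simp
  also have "\<dots> = pinj_op D \<phi> (restr (insert x F) f)"
    unfolding split by (auto simp: pinj_op_def fun_eq_iff)
  finally show ?case .
qed

lemma bounded_op_eq_pinj_op:
  assumes A: "bounded_op X A" and DX: "D \<subseteq> X" and inj: "inj_on \<phi> D"
    and del: "\<forall>x\<in>X. A (delta x) = (if x \<in> D then delta (\<phi> x) else (\<lambda>_. 0))"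
    and f: "f \<in> L2 X"
  shows "A f = pinj_op D \<phi> f"
proof
  fix y
  obtain C where C: "\<forall>f\<in>L2 X. l2norm X (A f) \<le> C * l2norm X f"
    using A unfolding bounded_op_def by blast
  have "cmod (A f y - pinj_op D \<phi> f y) \<le> max C 0 * e" if e: "e > 0" for e
  proof -
    define F1 where "F1 = (if y \<in> \<phi> ` D then {the_inv_into D \<phi> y} else {})"
    have F1: "finite F1" "F1 \<subseteq> X" using DX the_inv_into_into[OF inj] by (auto simp: F1_def)
    obtain F where F: "finite F" "F1 \<subseteq> F" "F \<subseteq> X"
        and small: "infsum (\<lambda>x. (cmod (f x))\<^sup>2) (X - F) < e\<^sup>2"
      using L2_small_tail[OF f _ F1] e by (meson zero_less_power)
    define g where "g = restr (- F) f"
    have g: "g \<in> L2 X" unfolding g_def by (rule L2_restr[OF f])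
    have "f = (\<lambda>x. 1 * g x + restr F f x)" by (auto simp: restr_def g_def)
    hence "A f = (\<lambda>x. 1 * A g x + A (restr F f) x)"
      using bounded_op_linear[OF A g L2_restr[OF f]] by metis
    moreover have "pinj_op D \<phi> (restr F f) y = pinj_op D \<phi> f y"
      using F(2) F1_def by (auto simp: pinj_op_def restr_def)
    ultimately have diff: "A f y - pinj_op D \<phi> f y = A g y"
      using bounded_op_eq_pinj_op_finite[OF A inj del f F(1,3)] by simp
    have "l2norm X g = sqrt (infsum (\<lambda>x. (cmod (f x))\<^sup>2) (X - F))"
      unfolding l2norm_def g_def
      by (rule arg_cong[where f=sqrt], rule infsum_cong_neutral) (auto simp: restr_def)
    also have "\<dots> \<le> sqrt (e\<^sup>2)" using small by (intro real_sqrt_le_mono) simp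
    finally have ge: "l2norm X g \<le> e" using e by simp
    have "cmod (A g y) \<le> l2norm X (A g)" by (rule norm_le_l2norm[OF bounded_op_L2[OF A g]])
    also have "\<dots> \<le> C * l2norm X g" using C g by blast
    also have "\<dots> \<le> max C 0 * l2norm X g" by (rule mult_right_mono) (auto intro: l2norm_nonneg)
    also have "\<dots> \<le> max C 0 * e" by (rule mult_left_mono[OF ge]) simp
    finally show ?thesis unfolding diff .
  qed
  thus "A f y = pinj_op D \<phi> f y"
    using eq_zero_if_arbitrarily_small[of "A f y - pinj_op D \<phi> f y" "max C 0"] by simp
qed

lemma pinj_adj_L2:
  assumes DX: "D \<subseteq> X" and phX: "\<phi> ` D \<subseteq> X" and inj: "inj_on \<phi> D" and g: "g \<in> L2 X"
  shows "pinj_adj D \<phi> g \<in> L2 X" "l2norm X (pinj_adj D \<phi> g) \<le> l2norm X g"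
proof -
  let ?g = "\<lambda>y. (cmod (g y))\<^sup>2"
  have s1: "?g summable_on (\<phi> ` D)" by (rule summable_on_subset_banach[OF L2_summable[OF g] phX])
  hence s2: "(?g \<circ> \<phi>) summable_on D" using summable_on_reindex[OF inj] by blast
  have "(\<lambda>x. (cmod (pinj_adj D \<phi> g x))\<^sup>2) summable_on X \<longleftrightarrow> (?g \<circ> \<phi>) summable_on D"
    by (rule summable_on_cong_neutral) (use DX in \<open>auto simp: pinj_adj_def\<close>)
  thus "pinj_adj D \<phi> g \<in> L2 X" using s2 DX by (auto simp: L2_def pinj_adj_def)
  have "infsum (\<lambda>x. (cmod (pinj_adj D \<phi> g x))\<^sup>2) X = infsum (?g \<circ> \<phi>) D"
    by (rule infsum_cong_neutral) (use DX in \<open>auto simp: pinj_adj_def\<close>)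
  also have "\<dots> = infsum ?g (\<phi> ` D)" by (rule infsum_reindex[OF inj, symmetric])
  also have "\<dots> \<le> infsum ?g X"
    by (rule infsum_mono_neutral[OF s1 L2_summable[OF g]]) (use phX in auto)
  finally show "l2norm X (pinj_adj D \<phi> g) \<le> l2norm X g" unfolding l2norm_def by simp
qed

lemma pinj_adj_bounded: assumes "D \<subseteq> X" "\<phi> ` D \<subseteq> X" "inj_on \<phi> D"
  shows "bounded_op X (pinj_adj D \<phi>)"
  unfolding bounded_op_def
proof (intro conjI ballI allI)
  show "\<And>f. f \<in> L2 X \<Longrightarrow> pinj_adj D \<phi> f \<in> L2 X" using pinj_adj_L2[OF assms] by blast
  show "\<And>f g c. pinj_adj D \<phi> (\<lambda>x. c * f x + g x) = (\<lambda>x. c * pinj_adj D \<phi> f x + pinj_adj D \<phi> g x)"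
    by (auto simp: pinj_adj_def)
  show "\<exists>C. \<forall>f\<in>L2 X. l2norm X (pinj_adj D \<phi> f) \<le> C * l2norm X f"
    using pinj_adj_L2[OF assms] by (intro exI[of _ 1]) auto
qed

lemma l2inner_pinj_op: assumes DX: "D \<subseteq> X" and phX: "\<phi> ` D \<subseteq> X" and inj: "inj_on \<phi> D"
  shows "l2inner X (pinj_op D \<phi> f) g = l2inner X f (pinj_adj D \<phi> g)"
proof -
  have "l2inner X (pinj_op D \<phi> f) g = infsum (\<lambda>y. cnj (f (the_inv_into D \<phi> y)) * g y) (\<phi> ` D)"
    unfolding l2inner_def by (rule infsum_cong_neutral) (use phX in \<open>auto simp: pinj_op_def\<close>)
  also have "\<dots> = infsum ((\<lambda>y. cnj (f (the_inv_into D \<phi> y)) * g y) \<circ> \<phi>) D"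
    by (rule infsum_reindex[OF inj])
  also have "\<dots> = infsum (\<lambda>x. cnj (f x) * g (\<phi> x)) D"
    by (rule infsum_cong) (simp add: the_inv_into_f_f[OF inj])
  also have "\<dots> = l2inner X f (pinj_adj D \<phi> g)"
    unfolding l2inner_def by (rule infsum_cong_neutral) (use DX in \<open>auto simp: pinj_adj_def\<close>)
  finally show ?thesis .
qed

text \<open>The adjoint (chosen by \<open>adj\<close>) of an operator induced by a partial injection is
  composition with the injection. An adjoint is determined by its values at point masses.\<close>
lemma adj_eq_pinj_adj:
  assumes A: "bounded_op X A" and DX: "D \<subseteq> X" and phX: "\<phi> ` D \<subseteq> X" and inj: "inj_on \<phi> D"
    and del: "\<forall>x\<in>X. A (delta x) = (if x \<in> D then delta (\<phi> x) else (\<lambda>_. 0))"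
    and g: "g \<in> L2 X"
  shows "adj X A g = pinj_adj D \<phi> g"
proof
  have isa: "is_adjoint X A (pinj_adj D \<phi>)" unfolding is_adjoint_def
    using pinj_adj_bounded[OF DX phX inj] bounded_op_eq_pinj_op[OF A DX inj del]
      l2inner_pinj_op[OF DX phX inj] by simp
  have B: "is_adjoint X A (adj X A)" unfolding adj_def by (rule someI[of "is_adjoint X A", OF isa])
  fix x show "adj X A g x = pinj_adj D \<phi> g x"
  proof (cases "x \<in> X")
    case False
    have "bounded_op X (adj X A)" using B by (simp add: is_adjoint_def)
    thus ?thesis using False L2_vanishes bounded_op_L2 g pinj_adj_L2[OF DX phX inj g] by metis
  next
    case True
    have "adj X A g x = l2inner X (delta x) (adj X A g)" by (simp add: l2inner_delta[OF True])
    also have "\<dots> = l2inner X (A (delta x)) g"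
      using B L2_delta[OF True] g unfolding is_adjoint_def by simp
    also have "\<dots> = l2inner X (delta x) (pinj_adj D \<phi> g)"
      using isa L2_delta[OF True] g unfolding is_adjoint_def by simp
    also have "\<dots> = pinj_adj D \<phi> g x" by (simp add: l2inner_delta[OF True])
    finally show ?thesis .
  qed
qed

lemma restr_projection: assumes "\<forall>f\<in>L2 X. Q f = restr E f" shows "is_projection X Q"
  unfolding is_projection_def bounded_op_def op_eq_def
proof (intro conjI ballI allI)
  fix f assume f: "f \<in> L2 X"
  show "Q f \<in> L2 X" using assms f L2_restr by simp
  have "Q (Q f) = restr E (restr E f)" using assms f L2_restr[OF f] by simp
  moreover have "restr E (restr E f) = restr E f" by (simp add: restr_def fun_eq_iff)
  ultimately show "(Q \<circ> Q) f = Q f" using assms f by simp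
next
  fix f g c assume f: "f \<in> L2 X" and g: "g \<in> L2 X"
  show "Q (\<lambda>x. c * f x + g x) = (\<lambda>x. c * Q f x + Q g x)" using assms f g L2_lin[OF f g]
    by (auto simp: restr_def)
  have "(\<lambda>x. cnj (restr E f x) * g x) = (\<lambda>x. cnj (f x) * restr E g x)" by (auto simp: restr_def)
  thus "l2inner X (Q f) g = l2inner X f (Q g)" using assms f g by (simp add: l2inner_def)
next
  show "\<exists>C. \<forall>f\<in>L2 X. l2norm X (Q f) \<le> C * l2norm X f"
  proof (intro exI[of _ 1] ballI)
    fix f assume f: "f \<in> L2 X"
    have "infsum (\<lambda>x. (cmod (restr E f x))\<^sup>2) X \<le> infsum (\<lambda>x. (cmod (f x))\<^sup>2) X"
      by (rule infsum_mono[OF _ L2_summable[OF f]])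
        (use L2_summable[OF L2_restr[OF f]] in \<open>auto simp: restr_def\<close>)
    thus "l2norm X (Q f) \<le> 1 * l2norm X f" using assms f by (simp add: l2norm_def)
  qed
qed

lemma l2inner_restr: assumes f: "f \<in> L2 X"
  shows "(\<lambda>x. if x \<in> E then (cmod (f x))\<^sup>2 else 0) summable_on X"
    "l2inner X f (restr E f) = of_real (infsum (\<lambda>x. if x \<in> E then (cmod (f x))\<^sup>2 else 0) X)"
proof -
  show s: "(\<lambda>x. if x \<in> E then (cmod (f x))\<^sup>2 else 0) summable_on X"
    by (rule summable_on_comparison_test[OF L2_summable[OF f]]) auto
  have "cnj z * z = of_real ((cmod z)\<^sup>2)" for z by (metis complex_norm_square mult.commute)
  hence "(\<lambda>x. cnj (f x) * restr E f x) = (\<lambda>x. of_real (if x \<in> E then (cmod (f x))\<^sup>2 else 0))"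
    by (simp add: restr_def fun_eq_iff)
  moreover have "((\<lambda>x. complex_of_real (if x \<in> E then (cmod (f x))\<^sup>2 else 0)) has_sum
      of_real (infsum (\<lambda>x. if x \<in> E then (cmod (f x))\<^sup>2 else 0) X)) X"
    by (rule has_sum_of_real[OF has_sum_infsum[OF s]])
  ultimately show "l2inner X f (restr E f) = of_real (infsum (\<lambda>x. if x \<in> E then (cmod (f x))\<^sup>2 else 0) X)"
    unfolding l2inner_def by (simp add: infsumI)
qed

lemma restr_op_le:
  assumes "\<forall>f\<in>L2 X. P f = restr F f" "\<forall>f\<in>L2 X. Q f = restr E f" "F \<inter> X \<subseteq> E"
  shows "op_le X P Q"
  unfolding op_le_def
proof (intro ballI conjI)
  fix f assume f: "f \<in> L2 X"
  note QE = l2inner_restr[OF f, of E] and PF = l2inner_restr[OF f, of F]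
  have "infsum (\<lambda>x. if x \<in> F then (cmod (f x))\<^sup>2 else 0) X
      \<le> infsum (\<lambda>x. if x \<in> E then (cmod (f x))\<^sup>2 else 0) X"
    by (rule infsum_mono[OF PF(1) QE(1)]) (use assms(3) in auto)
  thus "Im (l2inner X f (Q f) - l2inner X f (P f)) = 0"
    "0 \<le> Re (l2inner X f (Q f) - l2inner X f (P f))"
    using assms(1,2) f QE(2) PF(2) by simp_all
qed

lemma sum_restr_disjoint:
  assumes "finite S" "\<forall>a\<in>S. \<forall>b\<in>S. a \<noteq> b \<longrightarrow> C a \<inter> C b = {}"
  shows "(\<Sum>l\<in>S. restr (C l) f y) = restr (\<Union>l\<in>S. C l) f y"
proof (cases "\<exists>l\<in>S. y \<in> C l")
  case True
  then obtain l0 where l0: "l0 \<in> S" "y \<in> C l0" by blast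
  have "(\<Sum>l\<in>S. restr (C l) f y) = (\<Sum>l\<in>S. if l = l0 then f y else 0)"
    by (rule sum.cong) (use assms(2) l0 in \<open>auto simp: restr_def\<close>)
  also have "\<dots> = f y" using assms(1) l0(1) by simp
  finally show ?thesis using l0 by (auto simp: restr_def)
next
  case False thus ?thesis by (auto simp: restr_def)
qed

lemma pinj_adj_pinj_op: "inj_on \<phi> D \<Longrightarrow> pinj_adj D \<phi> (pinj_op D \<phi> f) = restr D f"
  by (auto simp: pinj_adj_def pinj_op_def restr_def fun_eq_iff the_inv_into_f_f)

lemma pinj_op_pinj_adj: "inj_on \<phi> D \<Longrightarrow> pinj_op D \<phi> (pinj_adj D \<phi> f) = restr (\<phi> ` D) f"
  by (auto simp: pinj_adj_def pinj_op_def restr_def fun_eq_iff the_inv_into_f_f the_inv_into_into)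

lemma pinj_op_id: assumes "\<forall>x\<in>D. \<phi> x = x" shows "pinj_op D \<phi> f = restr D f"
proof -
  have "inj_on \<phi> D" "\<phi> ` D = D" using assms by (auto simp: inj_on_def)
  thus ?thesis using assms by (auto simp: pinj_op_def restr_def fun_eq_iff) (metis the_inv_into_f_f)
qed

lemma pinj_op_comp:
  assumes i1: "inj_on \<phi>1 D1" and i2: "inj_on \<phi>2 D2"
    and D3: "D3 = {x \<in> D2. \<phi>2 x \<in> D1}" and ph3: "\<forall>x\<in>D3. \<phi>3 x = \<phi>1 (\<phi>2 x)"
  shows "pinj_op D1 \<phi>1 (pinj_op D2 \<phi>2 f) = pinj_op D3 \<phi>3 f"
proof
  fix y
  have i3: "inj_on \<phi>3 D3" using i1 i2 ph3 D3 unfolding inj_on_def by auto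
  show "pinj_op D1 \<phi>1 (pinj_op D2 \<phi>2 f) y = pinj_op D3 \<phi>3 f y"
  proof (cases "\<exists>x\<in>D3. y = \<phi>3 x")
    case True
    then obtain x where x: "x \<in> D3" "y = \<phi>3 x" by blast
    hence "x \<in> D2" "\<phi>2 x \<in> D1" "y = \<phi>1 (\<phi>2 x)" using D3 ph3 by auto
    hence "pinj_op D1 \<phi>1 (pinj_op D2 \<phi>2 f) y = f x" using i1 i2 by (simp add: pinj_op_def the_inv_into_f_f)
    moreover have "pinj_op D3 \<phi>3 f y = f x" using x i3 by (simp add: pinj_op_def the_inv_into_f_f)
    ultimately show ?thesis by simp
  next
    case False
    have "pinj_op D1 \<phi>1 (pinj_op D2 \<phi>2 f) y = 0"
    proof (rule ccontr)
      assume "pinj_op D1 \<phi>1 (pinj_op D2 \<phi>2 f) y \<noteq> 0"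
      then obtain z where z: "z \<in> D1" "y = \<phi>1 z" "the_inv_into D1 \<phi>1 y \<in> \<phi>2 ` D2"
        by (auto simp: pinj_op_def split: if_splits)
      hence "z \<in> \<phi>2 ` D2" using the_inv_into_f_f[OF i1 z(1)] by simp
      then obtain x where "x \<in> D2" "z = \<phi>2 x" by blast
      hence "x \<in> D3" "y = \<phi>3 x" using z D3 ph3 by auto
      thus False using False by blast
    qed
    moreover have "pinj_op D3 \<phi>3 f y = 0" using False by (auto simp: pinj_op_def)
    ultimately show ?thesis by simp
  qed
qed

section \<open>k-graphs\<close>

locale k_graph =
  fixes k :: nat and G :: "'a kgraph"
  assumes kgraph: "is_kgraph k G"
begin

abbreviation "M \<equiv> mor G"
abbreviation "d \<equiv> deg G"
abbreviation "r \<equiv> rng G"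
abbreviation "s \<equiv> src G"
abbreviation "c \<equiv> cmp G"

lemma identity_axioms: "\<forall>l\<in>M. r l \<in> M \<and> s l \<in> M \<and> r (r l) = r l \<and> s (r l) = r l \<and>
    r (s l) = s l \<and> s (s l) = s l \<and> c (r l) l = l \<and> c l (s l) = l \<and>
    (\<forall>j. j \<notin> {1..k} \<longrightarrow> d l j = 0)"
  using kgraph unfolding is_kgraph_def by (elim conjE) assumption

lemma composition_axioms: "\<forall>l\<in>M. \<forall>m\<in>M. s l = r m \<longrightarrow>
    c l m \<in> M \<and> r (c l m) = r l \<and> s (c l m) = s m \<and> d (c l m) = (\<lambda>j. d l j + d m j)"
  using kgraph unfolding is_kgraph_def by (elim conjE) assumption

lemma associativity_axiom: "\<forall>l\<in>M. \<forall>m\<in>M. \<forall>n\<in>M. s l = r m \<and> s m = r n \<longrightarrow>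
    c (c l m) n = c l (c m n)"
  using kgraph unfolding is_kgraph_def by (elim conjE) assumption

lemma factorisation_axiom: "\<forall>l\<in>M. \<forall>m n. d l = (\<lambda>j. m j + n j) \<longrightarrow>
    (\<exists>!pr. fst pr \<in> M \<and> snd pr \<in> M \<and> d (fst pr) = m \<and> d (snd pr) = n \<and>
           s (fst pr) = r (snd pr) \<and> l = c (fst pr) (snd pr))"
  using kgraph unfolding is_kgraph_def by (elim conjE) assumption

lemma mor_r: "l \<in> M \<Longrightarrow> r l \<in> M" and mor_s: "l \<in> M \<Longrightarrow> s l \<in> M"
  and s_r: "l \<in> M \<Longrightarrow> s (r l) = r l"
  and r_s: "l \<in> M \<Longrightarrow> r (s l) = s l" and s_s: "l \<in> M \<Longrightarrow> s (s l) = s l"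
  and c_r: "l \<in> M \<Longrightarrow> c (r l) l = l" and c_s: "l \<in> M \<Longrightarrow> c l (s l) = l"
  and d_supp: "l \<in> M \<Longrightarrow> j \<notin> {1..k} \<Longrightarrow> d l j = 0"
  using identity_axioms by blast+

lemma cmp_mor: "l \<in> M \<Longrightarrow> m \<in> M \<Longrightarrow> s l = r m \<Longrightarrow> c l m \<in> M"
  and r_c: "l \<in> M \<Longrightarrow> m \<in> M \<Longrightarrow> s l = r m \<Longrightarrow> r (c l m) = r l"
  and s_c: "l \<in> M \<Longrightarrow> m \<in> M \<Longrightarrow> s l = r m \<Longrightarrow> s (c l m) = s m"
  and d_c: "l \<in> M \<Longrightarrow> m \<in> M \<Longrightarrow> s l = r m \<Longrightarrow> d (c l m) = (\<lambda>j. d l j + d m j)"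
  using composition_axioms by blast+

lemma assoc: "l \<in> M \<Longrightarrow> m \<in> M \<Longrightarrow> n \<in> M \<Longrightarrow> s l = r m \<Longrightarrow> s m = r n \<Longrightarrow>
   c (c l m) n = c l (c m n)"
  using associativity_axiom by blast

lemma factorisation_unique: "l \<in> M \<Longrightarrow> d l = (\<lambda>j. m j + n j) \<Longrightarrow>
   \<exists>!pr. fst pr \<in> M \<and> snd pr \<in> M \<and> d (fst pr) = m \<and> d (snd pr) = n \<and>
         s (fst pr) = r (snd pr) \<and> l = c (fst pr) (snd pr)"
  using factorisation_axiom by blast

lemma factorisation:
  assumes "l \<in> M" "d l = (\<lambda>j. m j + n j)"
  obtains a b where "a \<in> M" "b \<in> M" "d a = m" "d b = n" "s a = r b" "l = c a b"
  using factorisation_unique[OF assms] by auto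

lemma factorisation_cancel:
  assumes "a \<in> M" "b \<in> M" "a' \<in> M" "b' \<in> M" "s a = r b" "s a' = r b'"
    "c a b = c a' b'" "d a = d a'"
  shows "a = a' \<and> b = b'"
proof -
  have dab: "d (c a b) = (\<lambda>j. d a j + d b j)" using d_c[OF assms(1,2,5)] .
  moreover have "d (c a' b') = (\<lambda>j. d a' j + d b' j)" using d_c[OF assms(3,4,6)] .
  ultimately have "\<forall>j. d a j + d b j = d a j + d b' j" using assms(7,8) by metis
  hence db: "d b' = d b" by (simp add: fun_eq_iff)
  have "\<And>p1 p2. fst p1 \<in> M \<and> snd p1 \<in> M \<and> d (fst p1) = d a \<and> d (snd p1) = d b \<and>
        s (fst p1) = r (snd p1) \<and> c a b = c (fst p1) (snd p1) \<Longrightarrow>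
      fst p2 \<in> M \<and> snd p2 \<in> M \<and> d (fst p2) = d a \<and> d (snd p2) = d b \<and>
        s (fst p2) = r (snd p2) \<and> c a b = c (fst p2) (snd p2) \<Longrightarrow> p1 = p2"
    using factorisation_unique[OF cmp_mor[OF assms(1,2,5)] dab] by (metis (no_types, lifting))
  from this[of "(a, b)" "(a', b')"] show ?thesis using assms db by auto
qed

lemma d_s: assumes "l \<in> M" shows "d (s l) = (\<lambda>_. 0)"
  using d_c[OF assms mor_s[OF assms] r_s[OF assms, symmetric]] c_s[OF assms] by (simp add: fun_eq_iff)

lemma d_r: assumes "l \<in> M" shows "d (r l) = (\<lambda>_. 0)"
  using d_c[OF mor_r[OF assms] assms s_r[OF assms]] c_r[OF assms] by (simp add: fun_eq_iff)

lemma degree_zero_vertex: assumes l: "l \<in> M" and d0: "d l = (\<lambda>_. 0)" shows "r l = l \<and> s l = l"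
proof -
  have "r l = l \<and> l = s l"
    by (rule factorisation_cancel) (use l mor_r mor_s s_r r_s c_r c_s d0 d_r in auto)
  thus ?thesis by simp
qed

definition seg :: "'a \<Rightarrow> (nat \<Rightarrow> nat) \<Rightarrow> (nat \<Rightarrow> nat) \<Rightarrow> 'a" where
  "seg m p q = (SOME b. \<exists>a g. a \<in> M \<and> b \<in> M \<and> g \<in> M \<and> s a = r b \<and> s b = r g \<and> d a = p
      \<and> d b = (\<lambda>j. q j - p j) \<and> m = c a (c b g))"

lemma seg_unique:
  assumes "a \<in> M" "b \<in> M" "g \<in> M" "s a = r b" "s b = r g"
    "a' \<in> M" "b' \<in> M" "g' \<in> M" "s a' = r b'" "s b' = r g'" "d a = d a'" "d b = d b'"
    "c a (c b g) = c a' (c b' g')"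
  shows "b = b'"
proof -
  have "a = a' \<and> c b g = c b' g'"
    by (rule factorisation_cancel) (use assms cmp_mor r_c in auto)
  thus ?thesis using factorisation_cancel assms by blast
qed

lemma seg_eq:
  assumes "a \<in> M" "b \<in> M" "g \<in> M" "s a = r b" "s b = r g" "d a = p"
    "d b = (\<lambda>j. q j - p j)" "m = c a (c b g)"
  shows "seg m p q = b"
proof -
  have "\<exists>b a g. a \<in> M \<and> b \<in> M \<and> g \<in> M \<and> s a = r b \<and> s b = r g \<and> d a = p
      \<and> d b = (\<lambda>j. q j - p j) \<and> m = c a (c b g)" using assms by blast
  from someI_ex[OF this] obtain a' g' where h:
    "a' \<in> M \<and> seg m p q \<in> M \<and> g' \<in> M \<and> s a' = r (seg m p q) \<and> s (seg m p q) = r g' \<and> d a' = p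
      \<and> d (seg m p q) = (\<lambda>j. q j - p j) \<and> m = c a' (c (seg m p q) g')"
    unfolding seg_def by blast
  show ?thesis by (rule sym, rule seg_unique[of a b g a' "seg m p q" g']) (use h assms in auto)
qed

lemma seg_exists:
  assumes "m \<in> M" "\<And>j. p j \<le> q j" "\<And>j. q j \<le> d m j"
  obtains a b g where "a \<in> M" "b \<in> M" "g \<in> M" "s a = r b" "s b = r g" "d a = p"
    "d b = (\<lambda>j. q j - p j)" "d g = (\<lambda>j. d m j - q j)" "m = c a (c b g)"
proof -
  have "\<forall>j. p j \<le> d m j" using assms le_trans by blast
  hence "d m = (\<lambda>j. p j + (d m j - p j))" by (simp add: fun_eq_iff)
  then obtain a t where at: "a \<in> M" "t \<in> M" "d a = p" "d t = (\<lambda>j. d m j - p j)" "s a = r t" "m = c a t"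
    by (rule factorisation[OF assms(1)])
  have "d t = (\<lambda>j. (q j - p j) + (d m j - q j))" using at(4) assms by (auto simp: fun_eq_iff)
  then obtain b g where "b \<in> M" "g \<in> M" "d b = (\<lambda>j. q j - p j)" "d g = (\<lambda>j. d m j - q j)"
      "s b = r g" "t = c b g"
    by (rule factorisation[OF at(2)])
  with at show ?thesis using that r_c by auto
qed

lemma seg_props:
  assumes "m \<in> M" "\<And>j. p j \<le> q j" "\<And>j. q j \<le> d m j"
  shows "seg m p q \<in> M" "d (seg m p q) = (\<lambda>j. q j - p j)" "r (seg m p q) = seg m p p"
    "s (seg m p q) = seg m q q"
proof -
  obtain a b g where h: "a \<in> M" "b \<in> M" "g \<in> M" "s a = r b" "s b = r g" "d a = p"
      "d b = (\<lambda>j. q j - p j)" "d g = (\<lambda>j. d m j - q j)" "m = c a (c b g)"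
    using seg_exists[OF assms] by blast
  have mb: "seg m p q = b" by (rule seg_eq[OF h(1-7,9)])
  thus "seg m p q \<in> M" "d (seg m p q) = (\<lambda>j. q j - p j)" using h by auto
  have bg: "c b g \<in> M" "r (c b g) = r b" using cmp_mor[OF h(2,3,5)] r_c[OF h(2,3,5)] by auto
  have "c (s a) (c b g) = c b g" using c_r[OF bg(1)] bg(2) h(4) by simp
  hence "seg m p p = s a"
    by (intro seg_eq[of a "s a" "c b g"])
      (use h bg mor_s[OF h(1)] r_s[OF h(1)] s_s[OF h(1)] d_s[OF h(1)] in simp_all)
  thus "r (seg m p q) = seg m p p" using mb h by simp
  have ab: "c a b \<in> M" "s (c a b) = s b" "d (c a b) = q"
    using cmp_mor[OF h(1,2,4)] s_c[OF h(1,2,4)] d_c[OF h(1,2,4)] h assms(2) by (auto simp: fun_eq_iff)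
  have "m = c (c a b) (c (s b) g)" using c_r[OF h(3)] h assoc[OF h(1-5)] by simp
  hence "seg m q q = s b"
    by (intro seg_eq[OF ab(1) mor_s[OF h(2)] h(3)])
      (use ab r_s[OF h(2)] s_s[OF h(2)] h(5) d_s[OF h(2)] in simp_all)
  thus "s (seg m p q) = seg m q q" using mb by simp
qed

lemma seg_extend:
  assumes "m \<in> M" "g \<in> M" "s m = r g" "\<And>j. p j \<le> q j" "\<And>j. q j \<le> d m j"
  shows "seg (c m g) p q = seg m p q"
proof -
  obtain a b g' where h: "a \<in> M" "b \<in> M" "g' \<in> M" "s a = r b" "s b = r g'" "d a = p"
      "d b = (\<lambda>j. q j - p j)" "d g' = (\<lambda>j. d m j - q j)" "m = c a (c b g')"
    using seg_exists[OF assms(1,4,5)] by blast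
  have bg: "c b g' \<in> M" "s (c b g') = s g'" "r (c b g') = r b"
    using cmp_mor[OF h(2,3,5)] s_c[OF h(2,3,5)] r_c[OF h(2,3,5)] by auto
  have g3: "s g' = r g" using h(9) s_c[OF h(1) bg(1)] h(4) bg assms(3) by simp
  have "c m g = c a (c b (c g' g))"
    using h(9) assoc[OF h(1) bg(1) assms(2)] h(4) bg assms(3) assoc[OF h(2,3) assms(2) h(5) g3]
    by (simp add: g3)
  hence "seg (c m g) p q = b"
    by (intro seg_eq[OF h(1,2) cmp_mor[OF h(3) assms(2) g3] h(4) _ h(6,7)])
      (use h(5) r_c[OF h(3) assms(2) g3] in simp_all)
  thus ?thesis using seg_eq[OF h(1-7,9)] by simp
qed

lemma seg_comp:
  assumes "m \<in> M" "\<And>j. p j \<le> q j" "\<And>j. q j \<le> t j" "\<And>j. t j \<le> d m j"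
  shows "c (seg m p q) (seg m q t) = seg m p t"
proof -
  have pt: "\<And>j. p j \<le> t j" using assms le_trans by blast
  obtain a b g where h: "a \<in> M" "b \<in> M" "g \<in> M" "s a = r b" "s b = r g" "d a = p"
      "d b = (\<lambda>j. t j - p j)" "d g = (\<lambda>j. d m j - t j)" "m = c a (c b g)"
    using seg_exists[OF assms(1) pt assms(4)] by blast
  have "d b = (\<lambda>j. (q j - p j) + (t j - q j))" using h assms by (auto simp: fun_eq_iff)
  then obtain b1 b2 where b: "b1 \<in> M" "b2 \<in> M" "d b1 = (\<lambda>j. q j - p j)" "d b2 = (\<lambda>j. t j - q j)"
      "s b1 = r b2" "b = c b1 b2"
    by (rule factorisation[OF h(2)])
  have ab1: "s a = r b1" and b2g: "s b2 = r g"
    using b r_c[OF b(1,2,5)] s_c[OF b(1,2,5)] h by auto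
  have b2gM: "c b2 g \<in> M" "r (c b2 g) = r b2"
    using cmp_mor[OF b(2) h(3) b2g] r_c[OF b(2) h(3) b2g] by auto
  have m1: "m = c a (c b1 (c b2 g))" using h(9) b(6) assoc[OF b(1,2) h(3) b(5) b2g] by simp
  have "seg m p q = b1"
    by (rule seg_eq[OF h(1) b(1) b2gM(1) ab1 _ h(6) b(3) m1]) (use b2gM b(5) in simp)
  moreover have "seg m q t = b2"
  proof (rule seg_eq[OF cmp_mor[OF h(1) b(1) ab1] b(2) h(3) _ b2g])
    show "s (c a b1) = r b2" using s_c[OF h(1) b(1) ab1] b(5) by simp
    show "d (c a b1) = q" using d_c[OF h(1) b(1) ab1] h(6) b(3) assms(2) by (auto simp: fun_eq_iff)
    show "m = c (c a b1) (c b2 g)" using m1 assoc[OF h(1) b(1) b2gM(1) ab1] b(5) b2gM by simp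
  qed (use b in simp)
  ultimately show ?thesis using seg_eq[OF h(1-7,9)] b(6) by simp
qed

lemma seg_full: "l \<in> M \<Longrightarrow> seg l (\<lambda>_. 0) (d l) = l"
  by (rule seg_eq[of "r l" l "s l"]) (use mor_r mor_s s_r r_s d_r c_r c_s in auto)

lemma seg_shift:
  assumes "al \<in> M" "be \<in> M" "s al = r be" "\<And>j. p j \<le> q j" "\<And>j. q j \<le> d be j"
  shows "seg (c al be) (\<lambda>j. d al j + p j) (\<lambda>j. d al j + q j) = seg be p q"
proof -
  obtain a b g where h: "a \<in> M" "b \<in> M" "g \<in> M" "s a = r b" "s b = r g" "d a = p"
      "d b = (\<lambda>j. q j - p j)" "d g = (\<lambda>j. d be j - q j)" "be = c a (c b g)"
    using seg_exists[OF assms(2,4,5)] by blast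
  have bg: "c b g \<in> M" "r (c b g) = r b" using cmp_mor[OF h(2,3,5)] r_c[OF h(2,3,5)] by auto
  have ala: "s al = r a" using h(9) r_c[OF h(1) bg(1)] h(4) bg(2) assms(3) by simp
  have e: "c al be = c (c al a) (c b g)" using h(9) assoc[OF assms(1) h(1) bg(1) ala] h(4) bg(2) by simp
  have "seg (c al be) (\<lambda>j. d al j + p j) (\<lambda>j. d al j + q j) = b"
    by (rule seg_eq[OF cmp_mor[OF assms(1) h(1) ala] h(2,3) _ h(5) _ _ e])
      (use s_c[OF assms(1) h(1) ala] d_c[OF assms(1) h(1) ala] h(4,6,7) in simp_all)
  thus ?thesis using seg_eq[OF h(1-7,9)] by simp
qed

end

section \<open>Paths and prepending\<close>

lemma enat_diff_le: "enat q \<le> enat a + e \<Longrightarrow> enat (q - a) \<le> e"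
  by (cases e) auto
lemma enat_add_le_cancel: "(enat (a + u) \<le> enat a + e) = (enat u \<le> e)"
  by (cases e) auto
lemma enat_le_add: "enat a \<le> enat a + e"
  by (cases e) auto
lemma enat_add_cancel_left: "enat a + e = enat a + e' \<Longrightarrow> e = e'"
  by (cases e; cases e') auto
lemma enat_add_le_of_le_diff: "enat n \<le> e \<Longrightarrow> enat q \<le> e - enat n \<Longrightarrow> enat (n + q) \<le> e"
  by (cases e) auto
lemma enat_add_diff_cancel: "enat n \<le> e \<Longrightarrow> enat n + (e - enat n) = e"
  by (cases e) auto
lemma enat_add_assoc_nat: "enat (a + b) + e = enat a + (enat b + e)"
  by (cases e) auto

lemma pdom_iff: "(p, q) \<in> pdom n \<longleftrightarrow> (\<forall>j. p j \<le> q j) \<and> (\<forall>j. enat (q j) \<le> n j)"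
  by (simp add: pdom_def)

lemma pdom_trans: "(p, q) \<in> pdom n \<Longrightarrow> (q, t) \<in> pdom n \<Longrightarrow> (p, t) \<in> pdom n"
  unfolding pdom_iff using order_trans by blast

lemma pdom_vertices:
  assumes "(p, q) \<in> pdom n"
  shows "(p, p) \<in> pdom n" "(q, q) \<in> pdom n" "((\<lambda>_. 0), q) \<in> pdom n" "((\<lambda>_. 0), p) \<in> pdom n"
proof -
  have "enat (p j) \<le> n j" for j
    using assms order_trans[of "enat (p j)" "enat (q j)" "n j"] by (simp add: pdom_iff)
  thus "(p, p) \<in> pdom n" "(q, q) \<in> pdom n" "((\<lambda>_. 0), q) \<in> pdom n" "((\<lambda>_. 0), p) \<in> pdom n"
    using assms by (simp_all add: pdom_iff)
qed

lemma pdom_origin: "((\<lambda>_. 0), (\<lambda>_. 0)) \<in> pdom n"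
  by (simp add: pdom_iff zero_enat_def[symmetric])

context k_graph
begin

lemma pathD: "is_path k G x \<Longrightarrow> (p, q) \<in> pdom (fst x) \<Longrightarrow>
  snd x (p, q) \<in> M \<and> d (snd x (p, q)) = (\<lambda>j. q j - p j) \<and> r (snd x (p, q)) = snd x (p, p) \<and>
  s (snd x (p, q)) = snd x (q, q)"
  unfolding is_path_def by blast

lemma path_comp: "is_path k G x \<Longrightarrow> (p, q) \<in> pdom (fst x) \<Longrightarrow> (q, t) \<in> pdom (fst x) \<Longrightarrow>
  snd x (p, t) = c (snd x (p, q)) (snd x (q, t))"
  unfolding is_path_def by blast

lemma path_undefined: "is_path k G x \<Longrightarrow> pq \<notin> pdom (fst x) \<Longrightarrow> snd x pq = undefined"
  unfolding is_path_def by blast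

lemma path_supp: "is_path k G x \<Longrightarrow> j \<notin> {1..k} \<Longrightarrow> fst x j = 0"
  unfolding is_path_def by blast

lemma prng_mor: assumes "is_path k G x"
  shows "prng x \<in> M" "d (prng x) = (\<lambda>_. 0)" "s (prng x) = prng x" "r (prng x) = prng x"
  using pathD[OF assms pdom_origin] by (auto simp: prng_def)

lemma path_seg:
  assumes "is_path k G y" "(p, q) \<in> pdom (fst y)" "(q, t) \<in> pdom (fst y)"
  shows "snd y (p, q) = seg (snd y (\<lambda>_. 0, t)) p q"
proof -
  have pt: "(p, t) \<in> pdom (fst y)" using pdom_trans[OF assms(2,3)] .
  have p0: "((\<lambda>_. 0), p) \<in> pdom (fst y)" using pdom_vertices[OF assms(2)] by blast
  have split1: "snd y (p, t) = c (snd y (p, q)) (snd y (q, t))" by (rule path_comp[OF assms])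
  have split0: "snd y (\<lambda>_. 0, t) = c (snd y (\<lambda>_. 0, p)) (snd y (p, t))"
    by (rule path_comp[OF assms(1) p0 pt])
  note P = pathD[OF assms(1) p0] pathD[OF assms(1) assms(2)] pathD[OF assms(1) assms(3)]
  show ?thesis
    by (rule sym, rule seg_eq[of "snd y (\<lambda>_. 0, p)" _ "snd y (q, t)"]) (use P split0 split1 in auto)
qed

definition is_prepend :: "'a \<Rightarrow> 'a kpath \<Rightarrow> 'a kpath \<Rightarrow> bool" where
  "is_prepend l x y \<longleftrightarrow> is_path k G y \<and> fst y = (\<lambda>j. enat (d l j) + fst x j) \<and>
     snd y (\<lambda>_. 0, d l) = l \<and>
     (\<forall>p q. (p, q) \<in> pdom (fst x) \<longrightarrow>
        snd y (\<lambda>j. d l j + p j, \<lambda>j. d l j + q j) = snd x (p, q))"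

lemma prepend_the: "prepend k G l x = (THE y. is_prepend l x y)"
  by (simp add: prepend_def is_prepend_def)

text \<open>There is at most one path \<open>l x\<close>: its initial segments \<open>(l x)(0, d l + u) = l x(0, u)\<close>
  determine all of its segments.\<close>
lemma is_prepend_unique:
  assumes "is_prepend l x y1" "is_prepend l x y2"
  shows "y1 = y2"
proof -
  have f: "fst y1 = fst y2" using assms by (simp add: is_prepend_def)
  have "snd y1 (p, q) = snd y2 (p, q)" for p q
  proof (cases "(p, q) \<in> pdom (fst y1)")
    case False
    thus ?thesis using path_undefined assms f unfolding is_prepend_def by metis
  next
    case True
    define u where "u = (\<lambda>j. q j - d l j)"
    define t where "t = (\<lambda>j. d l j + u j)"
    have q1: "\<forall>j. enat (q j) \<le> enat (d l j) + fst x j"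
      using True assms(1) by (simp add: is_prepend_def pdom_iff)
    have u0: "((\<lambda>_. 0), u) \<in> pdom (fst x)" unfolding pdom_iff u_def using q1 enat_diff_le by auto
    have init: "snd y (\<lambda>_. 0, t) = c l (snd x (\<lambda>_. 0, u))"
      and qt: "(q, t) \<in> pdom (fst y)" if y: "is_prepend l x y" "fst y = fst y1" for y
    proof -
      have yp: "is_path k G y" using y by (simp add: is_prepend_def)
      show "(q, t) \<in> pdom (fst y)"
        using y q1 enat_add_le_cancel u0 unfolding pdom_iff is_prepend_def t_def u_def by auto
      have a0: "((\<lambda>_. 0), d l) \<in> pdom (fst y)"
        using y enat_le_add unfolding is_prepend_def pdom_iff by auto
      have at: "(d l, t) \<in> pdom (fst y)" using \<open>(q, t) \<in> pdom (fst y)\<close> True y(2)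
        unfolding pdom_iff t_def by auto
      have "snd y (\<lambda>j. d l j + 0, \<lambda>j. d l j + u j) = snd x (\<lambda>_. 0, u)"
        using y u0 unfolding is_prepend_def by blast
      thus "snd y (\<lambda>_. 0, t) = c l (snd x (\<lambda>_. 0, u))"
        using path_comp[OF yp a0 at] y unfolding is_prepend_def t_def by simp
    qed
    have "snd y1 (p, q) = seg (snd y1 (\<lambda>_. 0, t)) p q"
      by (rule path_seg) (use assms(1) True qt[OF assms(1)] in \<open>auto simp: is_prepend_def\<close>)
    moreover have "snd y2 (p, q) = seg (snd y2 (\<lambda>_. 0, t)) p q"
      by (rule path_seg) (use assms(2) True qt[OF assms(2)] f in \<open>auto simp: is_prepend_def\<close>)
    ultimately show ?thesis using init[OF assms(1)] init[OF assms(2)] f by simp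
  qed
  thus ?thesis using f by (simp add: prod_eq_iff fun_eq_iff)
qed

definition init_seg :: "'a \<Rightarrow> 'a kpath \<Rightarrow> (nat \<Rightarrow> nat) \<Rightarrow> 'a" where
  "init_seg l x u = c l (snd x (\<lambda>_. 0, u))"

lemma init_seg_props:
  assumes l: "l \<in> M" and x: "is_path k G x" and sl: "s l = prng x"
    and u: "((\<lambda>_. 0), u) \<in> pdom (fst x)"
  shows "init_seg l x u \<in> M" "d (init_seg l x u) = (\<lambda>j. d l j + u j)"
    "s (init_seg l x u) = snd x (u, u)"
  using pathD[OF x u] sl cmp_mor[OF l] d_c[OF l] s_c[OF l]
  by (auto simp: init_seg_def prng_def)

lemma init_seg_extend:
  assumes l: "l \<in> M" and x: "is_path k G x" and sl: "s l = prng x"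
    and u: "((\<lambda>_. 0), u) \<in> pdom (fst x)" and uu': "(u, u') \<in> pdom (fst x)"
  shows "init_seg l x u' = c (init_seg l x u) (snd x (u, u'))"
  using path_comp[OF x u uu'] sl assoc[OF l] pathD[OF x u] pathD[OF x uu']
  by (simp add: init_seg_def prng_def)

definition prepend_witness :: "'a \<Rightarrow> 'a kpath \<Rightarrow> 'a kpath" where
  "prepend_witness l x = (\<lambda>j. enat (d l j) + fst x j,
     \<lambda>(p, q). if (p, q) \<in> pdom (\<lambda>j. enat (d l j) + fst x j)
             then seg (init_seg l x (\<lambda>j. q j - d l j)) p q else undefined)"

lemma prepend_witness_fst: "fst (prepend_witness l x) = (\<lambda>j. enat (d l j) + fst x j)"
  by (simp add: prepend_witness_def)

lemma prepend_witness_snd: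
  "(p, q) \<in> pdom (fst (prepend_witness l x)) \<Longrightarrow>
     snd (prepend_witness l x) (p, q) = seg (init_seg l x (\<lambda>j. q j - d l j)) p q"
  by (simp add: prepend_witness_def)

lemma prepend_witness_init:
  "(p, q) \<in> pdom (fst (prepend_witness l x)) \<Longrightarrow> ((\<lambda>_. 0), (\<lambda>j. q j - d l j)) \<in> pdom (fst x)"
  using enat_diff_le unfolding prepend_witness_fst pdom_iff by auto

lemma prepend_witness_snd_longer:
  assumes l: "l \<in> M" and x: "is_path k G x" and sl: "s l = prng x"
    and pq: "(p, q) \<in> pdom (fst (prepend_witness l x))" and qt: "(q, t) \<in> pdom (fst (prepend_witness l x))"
  shows "snd (prepend_witness l x) (p, q) = seg (init_seg l x (\<lambda>j. t j - d l j)) p q"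
proof -
  note u0 = prepend_witness_init[OF pq] and u1 = prepend_witness_init[OF qt]
  have b: "((\<lambda>j. q j - d l j), (\<lambda>j. t j - d l j)) \<in> pdom (fst x)"
    using u1 qt unfolding pdom_iff by (auto simp: diff_le_mono)
  have "seg (init_seg l x (\<lambda>j. t j - d l j)) p q = seg (init_seg l x (\<lambda>j. q j - d l j)) p q"
    unfolding init_seg_extend[OF l x sl u0 b]
    by (rule seg_extend) (use init_seg_props[OF l x sl u0] pathD[OF x b] pq in \<open>auto simp: pdom_iff prepend_witness_fst\<close>)
  thus ?thesis using prepend_witness_snd[OF pq] by simp
qed

lemma prepend_witness_path:
  assumes l: "l \<in> M" and x: "is_path k G x" and sl: "s l = prng x"
  shows "is_path k G (prepend_witness l x)"
  unfolding is_path_def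
proof (intro conjI allI impI)
  let ?W = "prepend_witness l x"
  fix j assume "j \<notin> {1..k}" thus "fst ?W j = 0"
    using d_supp[OF l] path_supp[OF x] by (simp add: prepend_witness_fst zero_enat_def)
next
  fix pq assume "pq \<notin> pdom (fst (prepend_witness l x))" thus "snd (prepend_witness l x) pq = undefined"
    by (cases pq) (simp add: prepend_witness_def)
next
  let ?W = "prepend_witness l x"
  fix p q assume h: "(p, q) \<in> pdom (fst ?W)"
  note pp = pdom_vertices(1,2)[OF h]
  note Z = init_seg_props[OF l x sl prepend_witness_init[OF h]]
  have le: "\<And>j. p j \<le> q j" "\<And>j. q j \<le> d (init_seg l x (\<lambda>j. q j - d l j)) j"
    using h Z(2) by (auto simp: pdom_iff)
  note P = seg_props[OF Z(1) le]
  show "snd ?W (p, q) \<in> M" "d (snd ?W (p, q)) = (\<lambda>j. q j - p j)"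
    "r (snd ?W (p, q)) = snd ?W (p, p)" "s (snd ?W (p, q)) = snd ?W (q, q)"
    using P prepend_witness_snd[OF h] prepend_witness_snd_longer[OF l x sl pp(1) h]
      prepend_witness_snd[OF pp(2)] by simp_all
next
  let ?W = "prepend_witness l x"
  fix p q t assume h: "(p, q) \<in> pdom (fst ?W) \<and> (q, t) \<in> pdom (fst ?W)"
  hence pt: "(p, t) \<in> pdom (fst ?W)" using pdom_trans by blast
  note Z = init_seg_props[OF l x sl prepend_witness_init[OF conjunct2[OF h]]]
  show "snd ?W (p, t) = c (snd ?W (p, q)) (snd ?W (q, t))"
    unfolding prepend_witness_snd[OF pt] prepend_witness_snd_longer[OF l x sl conjunct1[OF h] conjunct2[OF h]]
      prepend_witness_snd[OF conjunct2[OF h]]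
    by (rule seg_comp[symmetric]) (use Z h in \<open>auto simp: pdom_iff\<close>)
qed

lemma is_prepend_witness:
  assumes l: "l \<in> M" and x: "is_path k G x" and sl: "s l = prng x"
  shows "is_prepend l x (prepend_witness l x)"
proof -
  note fstW = prepend_witness_fst[of l x]
  have "init_seg l x (\<lambda>_. 0) = l" using c_s[OF l] sl by (simp add: init_seg_def prng_def)
  moreover have "((\<lambda>_. 0), d l) \<in> pdom (fst (prepend_witness l x))"
    unfolding fstW pdom_iff using enat_le_add by auto
  ultimately have first: "snd (prepend_witness l x) (\<lambda>_. 0, d l) = l"
    using prepend_witness_snd seg_full[OF l] by simp
  have shift: "snd (prepend_witness l x) (\<lambda>j. d l j + p j, \<lambda>j. d l j + q j) = snd x (p, q)"
    if pq: "(p, q) \<in> pdom (fst x)" for p q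
  proof -
    have a: "((\<lambda>j. d l j + p j), (\<lambda>j. d l j + q j)) \<in> pdom (fst (prepend_witness l x))"
      using pq unfolding fstW pdom_iff by (simp add: enat_add_le_cancel)
    note P = pathD[OF x pdom_vertices(3)[OF pq]]
    have rl: "s l = r (snd x (\<lambda>_. 0, q))" using P sl by (simp add: prng_def)
    have "snd (prepend_witness l x) (\<lambda>j. d l j + p j, \<lambda>j. d l j + q j)
        = seg (c l (snd x (\<lambda>_. 0, q))) (\<lambda>j. d l j + p j) (\<lambda>j. d l j + q j)"
      using prepend_witness_snd[OF a] by (simp add: init_seg_def)
    also have "\<dots> = seg (snd x (\<lambda>_. 0, q)) p q"
      by (rule seg_shift[OF l _ rl]) (use P pq in \<open>auto simp: pdom_iff\<close>)
    also have "\<dots> = snd x (p, q)"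
      by (rule path_seg[symmetric, OF x pq]) (use pdom_vertices[OF pq] in auto)
    finally show ?thesis .
  qed
  show ?thesis unfolding is_prepend_def using prepend_witness_path[OF l x sl] fstW first shift by simp
qed

lemma is_prepend_prepend:
  assumes "l \<in> M" "is_path k G x" "s l = prng x"
  shows "is_prepend l x (prepend k G l x)"
proof -
  have "\<And>y. is_prepend l x y \<Longrightarrow> y = prepend_witness l x"
    using is_prepend_unique is_prepend_witness[OF assms] by blast
  thus ?thesis unfolding prepend_the using theI[of "is_prepend l x", OF is_prepend_witness[OF assms]]
    by blast
qed

lemma prepend_unique:
  "l \<in> M \<Longrightarrow> is_path k G x \<Longrightarrow> s l = prng x \<Longrightarrow> is_prepend l x y \<Longrightarrow> prepend k G l x = y"
  using is_prepend_prepend is_prepend_unique by blast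

lemma prepend_props:
  assumes "l \<in> M" "is_path k G x" "s l = prng x"
  shows "is_path k G (prepend k G l x)" "fst (prepend k G l x) = (\<lambda>j. enat (d l j) + fst x j)"
    "snd (prepend k G l x) (\<lambda>_. 0, d l) = l"
    "\<And>p q. (p, q) \<in> pdom (fst x) \<Longrightarrow>
       snd (prepend k G l x) (\<lambda>j. d l j + p j, \<lambda>j. d l j + q j) = snd x (p, q)"
  using is_prepend_prepend[OF assms] unfolding is_prepend_def by auto

lemma prng_prepend:
  assumes "l \<in> M" "is_path k G x" "s l = prng x"
  shows "prng (prepend k G l x) = r l"
proof -
  note P = prepend_props[OF assms]
  have "((\<lambda>_. 0), d l) \<in> pdom (fst (prepend k G l x))" using P(2) enat_le_add by (simp add: pdom_iff)
  from pathD[OF P(1) this] P(3) show ?thesis by (simp add: prng_def)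
qed

lemma prepend_vertex: assumes "is_path k G x" shows "prepend k G (prng x) x = x"
proof -
  note P = prng_mor[OF assms]
  have "is_prepend (prng x) x x"
    unfolding is_prepend_def using assms P by (simp add: zero_enat_def[symmetric] prng_def)
  thus ?thesis using prepend_unique P assms by simp
qed

lemma prepend_assoc:
  assumes l: "l \<in> M" and m: "m \<in> M" and lm: "s l = r m" and x: "is_path k G x"
    and mx: "s m = prng x"
  shows "prepend k G (c l m) x = prepend k G l (prepend k G m x)"
proof (rule prepend_unique[OF cmp_mor[OF l m lm] x])
  show "s (c l m) = prng x" using s_c[OF l m lm] mx by simp
  define w where "w = prepend k G m x"
  note W = prepend_props[OF m x mx, folded w_def]
  have lw: "s l = prng w" using prng_prepend[OF m x mx] lm w_def by simp
  define u where "u = prepend k G l w"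
  note U = prepend_props[OF l W(1) lw, folded u_def]
  have dlm: "d (c l m) = (\<lambda>j. d l j + d m j)" by (rule d_c[OF l m lm])
  have fu: "fst u = (\<lambda>j. enat (d (c l m) j) + fst x j)" using U(2) W(2) dlm by (simp add: enat_add_assoc_nat)
  have a1: "((\<lambda>_. 0), d l) \<in> pdom (fst u)" using U(2) enat_le_add by (simp add: pdom_iff)
  have a2: "(d l, d (c l m)) \<in> pdom (fst u)" using fu dlm enat_le_add by (simp add: pdom_iff)
  have a3: "((\<lambda>_. 0), d m) \<in> pdom (fst w)" using W(2) enat_le_add by (simp add: pdom_iff)
  have "snd u (d l, d (c l m)) = m" using U(4)[OF a3] W(3) dlm by simp
  hence first: "snd u (\<lambda>_. 0, d (c l m)) = c l m" using path_comp[OF U(1) a1 a2] U(3) by simp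
  have shift: "snd u (\<lambda>j. d (c l m) j + p j, \<lambda>j. d (c l m) j + q j) = snd x (p, q)"
    if "(p, q) \<in> pdom (fst x)" for p q
  proof -
    have "((\<lambda>j. d m j + p j), (\<lambda>j. d m j + q j)) \<in> pdom (fst w)"
      using that W(2) by (simp add: pdom_iff enat_add_le_cancel)
    from U(4)[OF this] W(4)[OF that] show ?thesis using dlm by (simp add: add.assoc)
  qed
  show "is_prepend (c l m) x (prepend k G l (prepend k G m x))"
    unfolding is_prepend_def u_def[symmetric] w_def[symmetric] using U(1) fu first shift by blast
qed

lemma prepend_cancel:
  assumes l: "l \<in> M" and x: "is_path k G x" and y: "is_path k G y"
    and "s l = prng x" "s l = prng y" and e: "prepend k G l x = prepend k G l y"
  shows "x = y"
proof -
  note X = prepend_props[OF l x assms(4)] and Y = prepend_props[OF l y assms(5)]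
  have "fst (prepend k G l x) = fst (prepend k G l y)" using e by simp
  hence "\<And>j. enat (d l j) + fst x j = enat (d l j) + fst y j" unfolding X(2) Y(2) by (rule fun_cong)
  hence f: "fst x = fst y" by (intro ext) (rule enat_add_cancel_left)
  have "snd x pq = snd y pq" for pq
  proof (cases "pq \<in> pdom (fst x)")
    case True
    then obtain p q where pq: "pq = (p, q)" by (cases pq)
    thus ?thesis using X(4)[of p q] Y(4)[of p q] True f e by simp
  next
    case False
    thus ?thesis using path_undefined[OF x False] path_undefined[OF y] f by simp
  qed
  thus ?thesis using f by (simp add: prod_eq_iff fun_eq_iff)
qed

lemma prepend_inj:
  assumes "l \<in> M" "l' \<in> M" "is_path k G x" "is_path k G y"
    "s l = prng x" "s l' = prng y" "d l = d l'" "prepend k G l x = prepend k G l' y"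
  shows "l = l' \<and> x = y"
proof -
  have "l = l'"
    using prepend_props(3)[OF assms(1,3,5)] prepend_props(3)[OF assms(2,4,6)] assms(7,8) by metis
  moreover have "x = y" by (rule prepend_cancel[OF assms(1,3,4,5)]) (use assms(6,8) \<open>l = l'\<close> in simp_all)
  ultimately show ?thesis by simp
qed

definition shift_path :: "(nat \<Rightarrow> nat) \<Rightarrow> 'a kpath \<Rightarrow> 'a kpath" where
  "shift_path n z = (\<lambda>j. fst z j - enat (n j),
     \<lambda>(p, q). if (p, q) \<in> pdom (\<lambda>j. fst z j - enat (n j))
             then snd z (\<lambda>j. n j + p j, \<lambda>j. n j + q j) else undefined)"

lemma path_factorisation:
  assumes z: "is_path k G z" and n: "\<And>j. enat (n j) \<le> fst z j"
  shows "is_path k G (shift_path n z)" "snd z (\<lambda>_. 0, n) \<in> M" "d (snd z (\<lambda>_. 0, n)) = n"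
    "s (snd z (\<lambda>_. 0, n)) = prng (shift_path n z)"
    "fst (shift_path n z) = (\<lambda>j. fst z j - enat (n j))"
    "prepend k G (snd z (\<lambda>_. 0, n)) (shift_path n z) = z"
proof -
  define x where "x = shift_path n z"
  have fx: "fst x = (\<lambda>j. fst z j - enat (n j))" by (simp add: x_def shift_path_def)
  have sx: "snd x (p, q) = (if (p, q) \<in> pdom (fst x)
      then snd z (\<lambda>j. n j + p j, \<lambda>j. n j + q j) else undefined)" for p q
    by (simp add: x_def shift_path_def)
  have sh: "((\<lambda>j. n j + p j), (\<lambda>j. n j + q j)) \<in> pdom (fst z)" if "(p, q) \<in> pdom (fst x)" for p q
    using that n enat_add_le_of_le_diff unfolding fx pdom_iff by auto
  show px: "is_path k G (shift_path n z)" unfolding x_def[symmetric] is_path_def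
  proof (intro conjI allI impI)
    fix j assume "j \<notin> {1..k}" thus "fst x j = 0" using path_supp[OF z] fx by (simp add: zero_enat_def)
  next
    fix pq assume "pq \<notin> pdom (fst x)" thus "snd x pq = undefined" by (cases pq) (simp add: sx)
  next
    fix p q assume h: "(p, q) \<in> pdom (fst x)"
    show "snd x (p, q) \<in> M" "d (snd x (p, q)) = (\<lambda>j. q j - p j)" "r (snd x (p, q)) = snd x (p, p)"
      "s (snd x (p, q)) = snd x (q, q)"
      using pathD[OF z sh[OF h]] h pdom_vertices(1,2)[OF h] by (simp_all add: sx)
  next
    fix p q t assume h: "(p, q) \<in> pdom (fst x) \<and> (q, t) \<in> pdom (fst x)"
    hence "(p, t) \<in> pdom (fst x)" using pdom_trans by blast
    thus "snd x (p, t) = c (snd x (p, q)) (snd x (q, t))"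
      using path_comp[OF z sh[of p q] sh[of q t]] h by (simp add: sx)
  qed
  have n0: "((\<lambda>_. 0), n) \<in> pdom (fst z)" using n by (simp add: pdom_iff)
  note P = pathD[OF z n0]
  show zn: "snd z (\<lambda>_. 0, n) \<in> M" "d (snd z (\<lambda>_. 0, n)) = n" using P by auto
  show sp: "s (snd z (\<lambda>_. 0, n)) = prng (shift_path n z)"
    using P pdom_origin unfolding x_def[symmetric] by (simp add: prng_def sx)
  show "fst (shift_path n z) = (\<lambda>j. fst z j - enat (n j))" using fx x_def by simp
  have "fst z = (\<lambda>j. enat (n j) + fst x j)" using fx n enat_add_diff_cancel by simp
  hence "is_prepend (snd z (\<lambda>_. 0, n)) (shift_path n z) z"
    unfolding is_prepend_def x_def[symmetric] zn using z sx by simp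
  thus "prepend k G (snd z (\<lambda>_. 0, n)) (shift_path n z) = z"
    by (rule prepend_unique[OF zn(1) px sp])
qed

lemma Lmin_iff: "(\<eta>, \<zeta>) \<in> Lmin G \<mu> \<nu> \<longleftrightarrow> \<eta> \<in> M \<and> \<zeta> \<in> M \<and> s \<mu> = r \<eta> \<and> s \<nu> = r \<zeta> \<and>
    c \<mu> \<eta> = c \<nu> \<zeta> \<and> d (c \<mu> \<eta>) = sup (d \<mu>) (d \<nu>)"
  by (simp add: Lmin_def)

lemma Lmin_deg:
  assumes L: "(\<eta>, \<zeta>) \<in> Lmin G \<mu> \<nu>" and mu: "\<mu> \<in> M" and nu: "\<nu> \<in> M"
  shows "d \<eta> = (\<lambda>j. max (d \<mu> j) (d \<nu> j) - d \<mu> j)" "d \<zeta> = (\<lambda>j. max (d \<mu> j) (d \<nu> j) - d \<nu> j)"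
    "s \<eta> = s \<zeta>"
proof -
  have h: "\<eta> \<in> M" "\<zeta> \<in> M" "s \<mu> = r \<eta>" "s \<nu> = r \<zeta>" "c \<mu> \<eta> = c \<nu> \<zeta>"
    and dmax: "\<And>j. d (c \<mu> \<eta>) j = max (d \<mu> j) (d \<nu> j)"
    using L by (auto simp: Lmin_iff sup_max)
  have "d \<mu> j + d \<eta> j = max (d \<mu> j) (d \<nu> j)" for j using d_c[OF mu h(1,3)] dmax[of j] by simp
  hence "d \<eta> j = max (d \<mu> j) (d \<nu> j) - d \<mu> j" for j by (metis add_diff_cancel_left')
  thus "d \<eta> = (\<lambda>j. max (d \<mu> j) (d \<nu> j) - d \<mu> j)" by (rule ext)
  have "d \<nu> j + d \<zeta> j = max (d \<mu> j) (d \<nu> j)" for j using d_c[OF nu h(2,4)] dmax[of j] h(5) by simp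
  hence "d \<zeta> j = max (d \<mu> j) (d \<nu> j) - d \<nu> j" for j by (metis add_diff_cancel_left')
  thus "d \<zeta> = (\<lambda>j. max (d \<mu> j) (d \<nu> j) - d \<nu> j)" by (rule ext)
  show "s \<eta> = s \<zeta>" using s_c[OF mu h(1,3)] s_c[OF nu h(2,4)] h(5) by simp
qed

lemma Lmin_finite: assumes "finite_kgraph G" "\<mu> \<in> M" "\<nu> \<in> M" shows "finite (Lmin G \<mu> \<nu>)"
proof (rule finite_subset)
  show "Lmin G \<mu> \<nu> \<subseteq> kLam G (\<lambda>j. max (d \<mu> j) (d \<nu> j) - d \<mu> j) \<times> kLam G (\<lambda>j. max (d \<mu> j) (d \<nu> j) - d \<nu> j)"
  proof (rule subrelI)
    fix a b assume L: "(a, b) \<in> Lmin G \<mu> \<nu>"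
    thus "(a, b) \<in> kLam G (\<lambda>j. max (d \<mu> j) (d \<nu> j) - d \<mu> j) \<times> kLam G (\<lambda>j. max (d \<mu> j) (d \<nu> j) - d \<nu> j)"
      using Lmin_deg(1,2)[OF L assms(2,3)] by (simp add: kLam_def Lmin_iff)
  qed
  show "finite (kLam G (\<lambda>j. max (d \<mu> j) (d \<nu> j) - d \<mu> j) \<times> kLam G (\<lambda>j. max (d \<mu> j) (d \<nu> j) - d \<nu> j))"
    using assms(1) unfolding finite_kgraph_def by blast
qed

lemma Lmin_factorisation_unique:
  assumes L1: "(\<eta>, \<zeta>) \<in> Lmin G \<mu> \<nu>" and L2: "(\<eta>', \<zeta>') \<in> Lmin G \<mu> \<nu>"
    and mu: "\<mu> \<in> M" and nu: "\<nu> \<in> M" and w: "is_path k G w" and w': "is_path k G w'"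
    and sw: "s \<eta> = prng w" and sw': "s \<eta>' = prng w'" and e: "prepend k G \<eta> w = prepend k G \<eta>' w'"
  shows "\<eta> = \<eta>' \<and> \<zeta> = \<zeta>' \<and> w = w'"
proof -
  have h1: "\<eta> \<in> M" "\<zeta> \<in> M" "s \<nu> = r \<zeta>" "c \<mu> \<eta> = c \<nu> \<zeta>" using L1 by (auto simp: Lmin_iff)
  have h2: "\<eta>' \<in> M" "\<zeta>' \<in> M" "s \<nu> = r \<zeta>'" "c \<mu> \<eta>' = c \<nu> \<zeta>'" using L2 by (auto simp: Lmin_iff)
  have "d \<eta> = d \<eta>'" using Lmin_deg(1)[OF L1 mu nu] Lmin_deg(1)[OF L2 mu nu] by simp
  hence eq: "\<eta> = \<eta>' \<and> w = w'" by (rule prepend_inj[OF h1(1) h2(1) w w' sw sw' _ e])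
  hence "c \<nu> \<zeta> = c \<nu> \<zeta>'" using h1(4) h2(4) by simp
  hence "\<zeta> = \<zeta>'" using factorisation_cancel[OF nu h1(2) nu h2(2) h1(3) h2(3)] by simp
  thus ?thesis using eq by simp
qed

lemma prefix_factor:
  assumes l: "l \<in> M" and u: "is_path k G u" and su: "s l = prng u"
    and ln: "\<And>j. d l j \<le> n j" and nz: "\<And>j. enat (n j) \<le> fst (prepend k G l u) j"
  obtains \<eta> where "\<eta> \<in> M" "s l = r \<eta>" "c l \<eta> = snd (prepend k G l u) (\<lambda>_. 0, n)"
    "s \<eta> = prng (shift_path n (prepend k G l u))" "u = prepend k G \<eta> (shift_path n (prepend k G l u))"
proof -
  define z where "z = prepend k G l u"
  define w where "w = shift_path n z"
  note Z = prepend_props[OF l u su, folded z_def]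
  note F = path_factorisation[OF Z(1) nz[folded z_def], folded w_def]
  have p1: "((\<lambda>_. 0), d l) \<in> pdom (fst z)" using Z(2) enat_le_add by (simp add: pdom_iff)
  have p2: "(d l, n) \<in> pdom (fst z)" using ln nz by (simp add: pdom_iff z_def)
  define \<eta> where "\<eta> = snd z (d l, n)"
  have al: "snd z (\<lambda>_. 0, n) = c l \<eta>" using path_comp[OF Z(1) p1 p2] Z(3) by (simp add: \<eta>_def)
  note P1 = pathD[OF Z(1) p1] and P2 = pathD[OF Z(1) p2]
  have eM: "\<eta> \<in> M" and le: "s l = r \<eta>" using P1 P2 Z(3) by (auto simp: \<eta>_def)
  have "s \<eta> = s (snd z (\<lambda>_. 0, n))" using pathD[OF Z(1) pdom_trans[OF p1 p2]] P2 by (simp add: \<eta>_def)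
  hence sw: "s \<eta> = prng w" using F(4) by simp
  have "prepend k G l (prepend k G \<eta> w) = prepend k G (snd z (\<lambda>_. 0, n)) w"
    using prepend_assoc[OF l eM le F(1) sw] al by simp
  also have "\<dots> = prepend k G l u" using F(6) z_def by simp
  finally have "prepend k G \<eta> w = u"
    using prepend_cancel[OF l prepend_props(1)[OF eM F(1) sw] u _ su] prng_prepend[OF eM F(1) sw] le
    by simp
  thus ?thesis using that[OF eM le] al sw unfolding w_def z_def by simp
qed

lemma Lmin_factorisation_exists:
  assumes mu: "\<mu> \<in> M" and nu: "\<nu> \<in> M" and y: "is_path k G y" and x: "is_path k G x"
    and sy: "s \<mu> = prng y" and sx: "s \<nu> = prng x" and e: "prepend k G \<mu> y = prepend k G \<nu> x"
  shows "\<exists>\<eta> \<zeta> w. (\<eta>, \<zeta>) \<in> Lmin G \<mu> \<nu> \<and> is_path k G w \<and> s \<eta> = prng w \<and>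
     y = prepend k G \<eta> w \<and> x = prepend k G \<zeta> w"
proof -
  define z where "z = prepend k G \<mu> y"
  define n where "n = (\<lambda>j. max (d \<mu> j) (d \<nu> j))"
  have fz: "fst z = (\<lambda>j. enat (d \<mu> j) + fst y j)" "fst z = (\<lambda>j. enat (d \<nu> j) + fst x j)"
    using prepend_props(2)[OF mu y sy] prepend_props(2)[OF nu x sx] e z_def by simp_all
  have nle: "enat (n j) \<le> fst z j" for j
  proof -
    have "enat (d \<mu> j) \<le> fst z j" unfolding fz(1) by (rule enat_le_add)
    moreover have "enat (d \<nu> j) \<le> fst z j" unfolding fz(2) by (rule enat_le_add)
    ultimately show ?thesis unfolding n_def by (simp add: max_def)
  qed
  have dle: "d \<mu> j \<le> n j" "d \<nu> j \<le> n j" for j by (simp_all add: n_def)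
  have nz: "\<And>j. enat (n j) \<le> fst (prepend k G \<mu> y) j" "\<And>j. enat (n j) \<le> fst (prepend k G \<nu> x) j"
    using nle e by (simp_all add: z_def)
  obtain \<eta> where et: "\<eta> \<in> M" "s \<mu> = r \<eta>" "c \<mu> \<eta> = snd z (\<lambda>_. 0, n)"
      "s \<eta> = prng (shift_path n z)" "y = prepend k G \<eta> (shift_path n z)"
    using prefix_factor[OF mu y sy dle(1) nz(1)] unfolding z_def by blast
  obtain \<zeta> where ze: "\<zeta> \<in> M" "s \<nu> = r \<zeta>" "c \<nu> \<zeta> = snd z (\<lambda>_. 0, n)"
      "x = prepend k G \<zeta> (shift_path n z)"
    using prefix_factor[OF nu x sx dle(2) nz(2)] unfolding z_def e by blast
  note F = path_factorisation[OF prepend_props(1)[OF mu y sy, folded z_def] nle]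
  have "d (c \<mu> \<eta>) = sup (d \<mu>) (d \<nu>)" using et(3) F(3) n_def by (simp add: sup_max fun_eq_iff)
  hence "(\<eta>, \<zeta>) \<in> Lmin G \<mu> \<nu>" using et ze by (simp add: Lmin_iff)
  thus ?thesis using et(4,5) ze(4) F(1) by blast
qed

end

section \<open>The boundary-path representation\<close>

locale boundary_rep = k_graph +
  fixes J K :: "nat set" and T :: "'a \<Rightarrow> 'a kpath op"
  assumes finite: "finite_kgraph G"
    and bounded: "\<forall>l\<in>M. bounded_op (bdryK k G J K) (T l)"
    and on_delta: "\<forall>l\<in>M. \<forall>x\<in>bdryK k G J K.
      T l (delta x) = (if s l = prng x then delta (prepend k G l x) else (\<lambda>_. 0))"
begin

abbreviation "X \<equiv> bdryK k G J K"
abbreviation "pre l \<equiv> prepend k G l"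

definition Dom :: "'a \<Rightarrow> 'a kpath set" where
  "Dom l = {x \<in> X. prng x = s l}"

lemma vertex_mor: "v \<in> vertices G \<Longrightarrow> v \<in> M \<and> d v = (\<lambda>_. 0)"
  by (simp add: vertices_def kLam_def)

lemma bdry_path: "x \<in> X \<Longrightarrow> is_path k G x"
  by (simp add: bdryK_def)

text \<open>Prepending a morphism changes the degree only by a finite amount, so \<open>l w\<close> is a
  boundary path exactly when w is.\<close>
lemma bdry_prepend_iff:
  assumes l: "l \<in> M" and w: "is_path k G w" and sl: "s l = prng w"
  shows "pre l w \<in> X \<longleftrightarrow> w \<in> X"
proof -
  have inf: "enat (d l j) + fst w j = \<infinity> \<longleftrightarrow> fst w j = \<infinity>" for j by (cases "fst w j") auto
  have "(\<forall>j\<in>J. fst (pre l w) j \<noteq> \<infinity>) = (\<forall>j\<in>J. fst w j \<noteq> \<infinity>)"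
    "(\<forall>i\<in>K. fst (pre l w) i = \<infinity>) = (\<forall>i\<in>K. fst w i = \<infinity>)"
    by (simp_all only: prepend_props(2)[OF l w sl] inf)
  thus ?thesis using prepend_props(1)[OF l w sl] w unfolding bdryK_def mem_Collect_eq by blast
qed

lemma Dom_subset: "Dom l \<subseteq> X"
  by (auto simp: Dom_def)

lemma Dom_prepend:
  assumes l: "l \<in> M" and x: "x \<in> Dom l" shows "pre l x \<in> X" "prng (pre l x) = r l"
proof -
  have "x \<in> X" "is_path k G x" "s l = prng x" using x bdry_path by (auto simp: Dom_def)
  thus "pre l x \<in> X" "prng (pre l x) = r l" using bdry_prepend_iff[OF l] prng_prepend[OF l] by simp_all
qed

lemma range_subset: "l \<in> M \<Longrightarrow> pre l ` Dom l \<subseteq> X"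
  using Dom_prepend by blast

lemma inj_on_pre: assumes l: "l \<in> M" shows "inj_on (pre l) (Dom l)"
  using prepend_cancel[OF l bdry_path bdry_path] by (auto simp: inj_on_def Dom_def)

lemma T_on_delta:
  "l \<in> M \<Longrightarrow> \<forall>x\<in>X. T l (delta x) = (if x \<in> Dom l then delta (pre l x) else (\<lambda>_. 0))"
  using on_delta by (auto simp: Dom_def)

lemma bounded_T: "l \<in> M \<Longrightarrow> bounded_op X (T l)"
  using bounded by blast

lemma T_eq: assumes "l \<in> M" "f \<in> L2 X" shows "T l f = pinj_op (Dom l) (pre l) f"
  by (rule bounded_op_eq_pinj_op[OF bounded_T Dom_subset inj_on_pre T_on_delta]) (use assms in simp_all)

lemma adj_T_eq: assumes "l \<in> M" "f \<in> L2 X" shows "adj X (T l) f = pinj_adj (Dom l) (pre l) f"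
  by (rule adj_eq_pinj_adj[OF bounded_T Dom_subset range_subset inj_on_pre T_on_delta])
    (use assms in simp_all)

lemma T_L2: "l \<in> M \<Longrightarrow> f \<in> L2 X \<Longrightarrow> T l f \<in> L2 X"
  using bounded_T bounded_op_L2 by blast

lemma adj_T_L2: assumes "l \<in> M" "f \<in> L2 X" shows "adj X (T l) f \<in> L2 X"
  unfolding adj_T_eq[OF assms] by (rule pinj_adj_L2(1)[OF Dom_subset range_subset inj_on_pre]) (use assms in simp_all)

lemma range_projection:
  assumes "l \<in> M" "f \<in> L2 X" shows "T l (adj X (T l) f) = restr (pre l ` Dom l) f"
  using T_eq[OF assms(1) adj_T_L2[OF assms]] adj_T_eq[OF assms] pinj_op_pinj_adj[OF inj_on_pre] assms
  by simp

lemma source_projection: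
  assumes "l \<in> M" "f \<in> L2 X" shows "adj X (T l) (T l f) = restr (Dom l) f"
  using adj_T_eq[OF assms(1) T_L2[OF assms]] T_eq[OF assms] pinj_adj_pinj_op[OF inj_on_pre] assms
  by simp

lemma T_vertex: assumes v: "v \<in> vertices G" and f: "f \<in> L2 X" shows "T v f = restr (Dom v) f"
proof -
  have v': "v \<in> M" "s v = v" using vertex_mor[OF v] degree_zero_vertex by auto
  have "\<forall>x\<in>Dom v. pre v x = x" using prepend_vertex bdry_path v' by (auto simp: Dom_def)
  thus ?thesis using T_eq[OF v'(1) f] pinj_op_id by simp
qed

lemma range_in_vertex_Dom:
  assumes v: "v \<in> vertices G" and l: "l \<in> M" "r l = v" shows "pre l ` Dom l \<subseteq> Dom v"
  using Dom_prepend[OF l(1)] l(2) degree_zero_vertex vertex_mor[OF v] by (auto simp: Dom_def)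

lemma ranges_disjoint:
  assumes a: "a \<in> kLam G n" and b: "b \<in> kLam G n" and ab: "a \<noteq> b"
  shows "pre a ` Dom a \<inter> pre b ` Dom b = {}"
proof (rule ccontr)
  assume "pre a ` Dom a \<inter> pre b ` Dom b \<noteq> {}"
  then obtain x y where "x \<in> Dom a" "y \<in> Dom b" "pre a x = pre b y" by blast
  hence "a = b" using prepend_inj[of a b x y] a b bdry_path by (auto simp: kLam_def Dom_def)
  thus False using ab by simp
qed

lemma sum_range_projections:
  fixes n :: "nat \<Rightarrow> nat" and v :: 'a
  assumes f: "f \<in> L2 X"
  defines "E \<equiv> {l \<in> kLam G n. r l = v}"
  shows "op_sum E (\<lambda>l. T l \<circ> adj X (T l)) f = restr (\<Union>l\<in>E. pre l ` Dom l) f"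
proof
  fix y
  have "op_sum E (\<lambda>l. T l \<circ> adj X (T l)) f y = (\<Sum>l\<in>E. restr (pre l ` Dom l) f y)"
    unfolding op_sum_def by (rule sum.cong) (auto simp: range_projection[OF _ f] kLam_def E_def)
  also have "\<dots> = restr (\<Union>l\<in>E. pre l ` Dom l) f y"
  proof (rule sum_restr_disjoint)
    show "finite E" using finite by (simp add: finite_kgraph_def E_def)
    show "\<forall>a\<in>E. \<forall>b\<in>E. a \<noteq> b \<longrightarrow> pre a ` Dom a \<inter> pre b ` Dom b = {}"
      unfolding E_def using ranges_disjoint by blast
  qed
  finally show "op_sum E (\<lambda>l. T l \<circ> adj X (T l)) f y = restr (\<Union>l\<in>E. pre l ` Dom l) f y" .
qed

text \<open>In a direction \<open>i \<in> K\<close> every boundary path has infinite degree, hence begins with an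
  edge of degree \<open>e_i\<close>: these ranges cover all paths with range v.\<close>
lemma edge_ranges_cover:
  assumes v: "v \<in> vertices G" and i: "i \<in> K"
  shows "(\<Union>l\<in>{l \<in> kLam G (unitv i). r l = v}. pre l ` Dom l) = Dom v"
proof
  show "(\<Union>l\<in>{l \<in> kLam G (unitv i). r l = v}. pre l ` Dom l) \<subseteq> Dom v"
    using range_in_vertex_Dom[OF v] by (auto simp: kLam_def)
next
  show "Dom v \<subseteq> (\<Union>l\<in>{l \<in> kLam G (unitv i). r l = v}. pre l ` Dom l)"
  proof
    fix z assume z: "z \<in> Dom v"
    have zX: "z \<in> X" and pz: "prng z = v" using z degree_zero_vertex vertex_mor[OF v] by (auto simp: Dom_def)
    have "enat (unitv i j) \<le> fst z j" for j
      using zX i by (simp add: bdryK_def unitv_def zero_enat_def[symmetric])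
    note F = path_factorisation[OF bdry_path[OF zX] this]
    define e where "e = snd z (\<lambda>_. 0, unitv i)"
    define w where "w = shift_path (unitv i) z"
    note F = F[folded e_def w_def]
    have "w \<in> X" using bdry_prepend_iff[OF F(2,1,4)] F(6) zX by simp
    hence "w \<in> Dom e" using F(4) by (simp add: Dom_def)
    moreover have "r e = v" using prng_prepend[OF F(2,1,4)] F(6) pz by simp
    ultimately show "z \<in> (\<Union>l\<in>{l \<in> kLam G (unitv i). r l = v}. pre l ` Dom l)"
      using F(2,3,6) by (force simp: kLam_def)
  qed
qed

lemma Lmin_mor: "p \<in> Lmin G \<mu> \<nu> \<Longrightarrow> fst p \<in> M \<and> snd p \<in> M"
  by (cases p) (simp add: Lmin_iff)

lemma Lmin_extension:
  assumes mu: "\<mu> \<in> M" and nu: "\<nu> \<in> M" and L: "(\<eta>, \<zeta>) \<in> Lmin G \<mu> \<nu>" and w: "w \<in> Dom \<eta>"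
  shows "w \<in> Dom \<zeta>" "pre \<eta> w \<in> Dom \<mu>" "pre \<zeta> w \<in> Dom \<nu>" "pre \<mu> (pre \<eta> w) = pre \<nu> (pre \<zeta> w)"
proof -
  have h: "\<eta> \<in> M" "\<zeta> \<in> M" "s \<mu> = r \<eta>" "s \<nu> = r \<zeta>" "c \<mu> \<eta> = c \<nu> \<zeta>" using L by (auto simp: Lmin_iff)
  show wz: "w \<in> Dom \<zeta>" using w Lmin_deg(3)[OF L mu nu] by (simp add: Dom_def)
  show "pre \<eta> w \<in> Dom \<mu>" "pre \<zeta> w \<in> Dom \<nu>" using Dom_prepend[OF h(1) w] Dom_prepend[OF h(2) wz] h
    by (auto simp: Dom_def)
  have "pre \<mu> (pre \<eta> w) = pre (c \<mu> \<eta>) w"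
    using prepend_assoc[OF mu h(1,3) bdry_path] w by (simp add: Dom_def)
  also have "\<dots> = pre \<nu> (pre \<zeta> w)"
    using prepend_assoc[OF nu h(2,4) bdry_path] wz h(5) by (simp add: Dom_def)
  finally show "pre \<mu> (pre \<eta> w) = pre \<nu> (pre \<zeta> w)" .
qed

lemma Lmin_decomposition:
  assumes mu: "\<mu> \<in> M" and nu: "\<nu> \<in> M" and y: "y \<in> Dom \<mu>" and x: "x \<in> Dom \<nu>"
    and e: "pre \<mu> y = pre \<nu> x"
  shows "\<exists>p\<in>Lmin G \<mu> \<nu>. \<exists>w\<in>Dom (fst p). y = pre (fst p) w \<and> x = pre (snd p) w"
proof -
  obtain \<eta> \<zeta> w where L: "(\<eta>, \<zeta>) \<in> Lmin G \<mu> \<nu>" and w: "is_path k G w" "s \<eta> = prng w"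
      and yw: "y = pre \<eta> w" and xw: "x = pre \<zeta> w"
    using Lmin_factorisation_exists[OF mu nu bdry_path bdry_path] y x e by (fastforce simp: Dom_def)
  have "\<eta> \<in> M" using L by (simp add: Lmin_iff)
  hence "w \<in> Dom \<eta>" using bdry_prepend_iff[OF _ w] y yw w(2) by (simp add: Dom_def)
  hence "(\<eta>, \<zeta>) \<in> Lmin G \<mu> \<nu> \<and> w \<in> Dom (fst (\<eta>, \<zeta>)) \<and> y = pre (fst (\<eta>, \<zeta>)) w \<and>
      x = pre (snd (\<eta>, \<zeta>)) w" using L yw xw by simp
  thus ?thesis by blast
qed

lemma Lmin_decomposition_unique:
  assumes mu: "\<mu> \<in> M" and nu: "\<nu> \<in> M" and p: "p \<in> Lmin G \<mu> \<nu>" "p' \<in> Lmin G \<mu> \<nu>"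
    and w: "w \<in> Dom (fst p)" "w' \<in> Dom (fst p')" and e: "pre (fst p) w = pre (fst p') w'"
  shows "p = p'"
  using Lmin_factorisation_unique[of "fst p" "snd p" \<mu> \<nu> "fst p'" "snd p'" w w'] assms bdry_path
  by (auto simp: Dom_def prod_eq_iff)

lemma T1_projection: "v \<in> vertices G \<Longrightarrow> is_projection X (T v)"
  using restr_projection T_vertex by blast

lemma T1_orthogonal:
  assumes v: "v \<in> vertices G" and w: "w \<in> vertices G" and vw: "v \<noteq> w"
  shows "op_eq X (T v \<circ> T w) zero_op"
  unfolding op_eq_def
proof
  fix f assume f: "f \<in> L2 X"
  have "y \<notin> Dom v \<or> y \<notin> Dom w" for y
    using vw degree_zero_vertex vertex_mor[OF v] vertex_mor[OF w] by (auto simp: Dom_def)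
  thus "(T v \<circ> T w) f = zero_op f"
    using T_vertex[OF w f] T_vertex[OF v L2_restr[OF f]] by (auto simp: restr_def zero_op_def)
qed

lemma T2:
  assumes l: "l \<in> M" and m: "m \<in> M" and lm: "s l = r m"
  shows "op_eq X (T l \<circ> T m) (T (c l m))"
  unfolding op_eq_def
proof
  fix f assume f: "f \<in> L2 X"
  have "Dom (c l m) = {x \<in> Dom m. pre m x \<in> Dom l}"
    using Dom_prepend[OF m] s_c[OF l m lm] lm by (auto simp: Dom_def)
  moreover have "\<forall>x\<in>Dom (c l m). pre (c l m) x = pre l (pre m x)"
    using prepend_assoc[OF l m lm bdry_path] s_c[OF l m lm] by (simp add: Dom_def)
  ultimately have "pinj_op (Dom l) (pre l) (pinj_op (Dom m) (pre m) f) = pinj_op (Dom (c l m)) (pre (c l m)) f"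
    by (rule pinj_op_comp[OF inj_on_pre[OF l] inj_on_pre[OF m]])
  thus "(T l \<circ> T m) f = T (c l m) f"
    using T_eq[OF m f] T_eq[OF l T_L2[OF m f]] T_eq[OF cmp_mor[OF l m lm] f] by simp
qed

lemma T3: assumes l: "l \<in> M" shows "op_eq X (adj X (T l) \<circ> T l) (T (s l))"
  unfolding op_eq_def
proof
  fix f assume f: "f \<in> L2 X"
  have "s l \<in> vertices G" using mor_s[OF l] d_s[OF l] by (simp add: vertices_def kLam_def)
  moreover have "Dom (s l) = Dom l" using s_s[OF l] by (simp add: Dom_def)
  ultimately show "(adj X (T l) \<circ> T l) f = T (s l) f"
    using source_projection[OF l f] T_vertex[OF _ f] by simp
qed

lemma T4:
  assumes v: "v \<in> vertices G"
  shows "op_le X (op_sum {l \<in> kLam G n. r l = v} (\<lambda>l. T l \<circ> adj X (T l))) (T v)"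
  by (rule restr_op_le[OF _ _ Int_lower1[THEN order_trans]])
    (use sum_range_projections T_vertex[OF v] range_in_vertex_Dom[OF v] in \<open>auto simp: kLam_def\<close>)

lemma T5_summand:
  assumes mu: "\<mu> \<in> M" and nu: "\<nu> \<in> M" and p: "p \<in> Lmin G \<mu> \<nu>" and f: "f \<in> L2 X"
  shows "T (fst p) (adj X (T (snd p)) f) y =
    (if y \<in> pre (fst p) ` Dom (fst p) then f (pre (snd p) (the_inv_into (Dom (fst p)) (pre (fst p)) y)) else 0)"
proof -
  have M: "fst p \<in> M" "snd p \<in> M" using p Lmin_mor by auto
  have "the_inv_into (Dom (fst p)) (pre (fst p)) y \<in> Dom (snd p)" if "y \<in> pre (fst p) ` Dom (fst p)"
    using that Lmin_extension(1)[OF mu nu, of "fst p" "snd p"] p the_inv_into_into[OF inj_on_pre[OF M(1)]]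
    by (metis order_refl prod.collapse)
  thus ?thesis using T_eq[OF M(1) adj_T_L2[OF M(2) f]] adj_T_eq[OF M(2) f]
    by (auto simp: pinj_op_def pinj_adj_def)
qed

lemma T5_sum_at_range:
  assumes mu: "\<mu> \<in> M" and nu: "\<nu> \<in> M" and f: "f \<in> L2 X" and p0: "p0 \<in> Lmin G \<mu> \<nu>"
    and w0: "w0 \<in> Dom (fst p0)" and y0: "y = pre (fst p0) w0"
  shows "(\<Sum>p\<in>Lmin G \<mu> \<nu>. T (fst p) (adj X (T (snd p)) f) y) = f (pre (snd p0) w0)"
proof -
  let ?L = "Lmin G \<mu> \<nu>" and ?t = "\<lambda>p. T (fst p) (adj X (T (snd p)) f) y"
  have others: "?t p = 0" if "p \<in> ?L - {p0}" for p
  proof -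
    have p: "p \<in> ?L" "p \<noteq> p0" using that by auto
    have "y \<notin> pre (fst p) ` Dom (fst p)"
    proof
      assume "y \<in> pre (fst p) ` Dom (fst p)"
      then obtain w where "w \<in> Dom (fst p)" "y = pre (fst p) w" by blast
      thus False using Lmin_decomposition_unique[OF mu nu p(1) p0 _ w0] y0 p(2) by metis
    qed
    thus ?thesis using T5_summand[OF mu nu p(1) f] by simp
  qed
  have "(\<Sum>p\<in>?L. ?t p) = ?t p0 + (\<Sum>p\<in>?L - {p0}. ?t p)"
    by (rule sum.remove[OF Lmin_finite[OF finite mu nu] p0])
  also have "\<dots> = ?t p0" using others by simp
  also have "\<dots> = f (pre (snd p0) w0)"
  proof -
    have "fst p0 \<in> M" using Lmin_mor[OF p0] by blast
    thus ?thesis using T5_summand[OF mu nu p0 f] y0 w0 the_inv_into_f_f[OF inj_on_pre w0] by simp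
  qed
  finally show ?thesis .
qed

lemma T5:
  assumes mu: "\<mu> \<in> M" and nu: "\<nu> \<in> M"
  shows "op_eq X (adj X (T \<mu>) \<circ> T \<nu>) (op_sum (Lmin G \<mu> \<nu>) (\<lambda>(\<eta>, \<zeta>). T \<eta> \<circ> adj X (T \<zeta>)))"
  unfolding op_eq_def
proof (intro ballI ext)
  fix f y assume f: "f \<in> L2 X"
  let ?L = "Lmin G \<mu> \<nu>" and ?t = "\<lambda>p. T (fst p) (adj X (T (snd p)) f) y"
  have rhs: "op_sum ?L (\<lambda>(\<eta>, \<zeta>). T \<eta> \<circ> adj X (T \<zeta>)) f y = (\<Sum>p\<in>?L. ?t p)"
    unfolding op_sum_def by (rule sum.cong) auto
  have lhs: "(adj X (T \<mu>) \<circ> T \<nu>) f y = pinj_adj (Dom \<mu>) (pre \<mu>) (pinj_op (Dom \<nu>) (pre \<nu>) f) y"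
    using adj_T_eq[OF mu T_L2[OF nu f]] T_eq[OF nu f] by simp
  show "(adj X (T \<mu>) \<circ> T \<nu>) f y = op_sum ?L (\<lambda>(\<eta>, \<zeta>). T \<eta> \<circ> adj X (T \<zeta>)) f y"
  proof (cases "\<exists>p\<in>?L. y \<in> pre (fst p) ` Dom (fst p)")
    case True
    then obtain p0 w0 where p0: "p0 \<in> ?L" and w0: "w0 \<in> Dom (fst p0)" and y0: "y = pre (fst p0) w0"
      by blast
    note E = Lmin_extension[OF mu nu, of "fst p0" "snd p0" w0, simplified, OF p0 w0]
    have "pinj_adj (Dom \<mu>) (pre \<mu>) (pinj_op (Dom \<nu>) (pre \<nu>) f) y = f (pre (snd p0) w0)"
      using E y0 the_inv_into_f_f[OF inj_on_pre[OF nu] E(3)] by (auto simp: pinj_adj_def pinj_op_def)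
    thus ?thesis using lhs rhs T5_sum_at_range[OF mu nu f p0 w0 y0] by simp
  next
    case False
    have "?t p = 0" if "p \<in> ?L" for p using T5_summand[OF mu nu that f] False that by auto
    hence R: "(\<Sum>p\<in>?L. ?t p) = 0" by simp
    have "pinj_adj (Dom \<mu>) (pre \<mu>) (pinj_op (Dom \<nu>) (pre \<nu>) f) y = 0"
    proof (rule ccontr)
      assume "pinj_adj (Dom \<mu>) (pre \<mu>) (pinj_op (Dom \<nu>) (pre \<nu>) f) y \<noteq> 0"
      then obtain x where "y \<in> Dom \<mu>" "x \<in> Dom \<nu>" "pre \<mu> y = pre \<nu> x"
        unfolding pinj_adj_def pinj_op_def by (auto split: if_splits)
      thus False using Lmin_decomposition[OF mu nu] False by blast
    qed
    thus ?thesis using lhs rhs R by simp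
  qed
qed

lemma TCK_family: "TCK_family k G X T"
  unfolding TCK_family_def partial_isometry_def
  using bounded T1_projection T1_orthogonal T2 T3 T4 T5
    restr_projection[of X "adj X (T l) \<circ> T l" "Dom l" for l] source_projection
  by simp

lemma cuntz_krieger:
  assumes "v \<in> vertices G" "i \<in> K"
  shows "op_eq X (op_sum {e \<in> kLam G (unitv i). r e = v} (\<lambda>e. T e \<circ> adj X (T e))) (T v)"
  using sum_range_projections edge_ranges_cover[OF assms] T_vertex[OF assms(1)]
  by (simp add: op_eq_def)

end

text \<open>The theorem is an instance of the locale.\<close>
theorem proposition3p5:
  fixes k :: nat and G :: "'a kgraph" and J K :: "nat set"
    and T :: "'a \<Rightarrow> 'a kpath op"
  assumes "is_kgraph k G" and "finite_kgraph G" and "no_sources k G"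
    and "J \<inter> K = {}" and "J \<union> K = {1..k}" and "J \<noteq> {}" and "K \<noteq> {}"
    and "\<forall>l\<in>mor G. bounded_op (bdryK k G J K) (T l)"
    and "\<forall>l\<in>mor G. \<forall>x\<in>bdryK k G J K.
           T l (delta x) = (if src G l = prng x then delta (prepend k G l x) else (\<lambda>_. 0))"
  shows "TCK_family k G (bdryK k G J K) T \<and>
    (\<forall>v\<in>vertices G. \<forall>i\<in>K.
       op_eq (bdryK k G J K)
         (op_sum {e \<in> kLam G (unitv i). rng G e = v} (\<lambda>e. T e \<circ> adj (bdryK k G J K) (T e)))
         (T v))"
proof -
  interpret boundary_rep k G J K T
    using assms(1,2,8,9) by (unfold_locales) auto
  show ?thesis using TCK_family cuntz_krieger by blast
qed

end
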